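(* Let $M\subset\mathbb{R}^{2d}$ satisfy the standing assumptions below, let $T$ be its outer symplectic billiard map and $H$ the function defined below, and write $|x|_H:=H(x)$. There exist constants $\Lambda>0$ and $\bar C>0$, depending only on $M$, such that for every $x$ with $|x|_H\ge\Lambda$ and every integer $k\ge1$, $$\big|\,|T^{2k}(x)|_H^2-|x|_H^2\,\big|\le \bar C\,k.$$
   Context: Equip $\mathbb{R}^{2d}$ with the standard inner product, norm $|\cdot|$, complex structure $J$ ($J^2=-I$, orthogonal) and symplectic form $\omega(u,v)=\langle Ju,v\rangle$. Standing assumptions: $M\subset\mathbb{R}^{2d}$ is a smooth closed hypersurface bounding a strictly convex domain containing the origin in its interior, and $M$ is a level set of a smooth function with positive definite Hessian. For a hypersurface $Q$ of this kind and $q\in Q$, the Reeb vector $R_Q(q)$ is the unique vector with $\omega(v,R_Q(q))=0$ for all $v\in T_qQ$ and $\omega(q,R_Q(q))=1$; the symplectic polar is $Q^*=\{R_Q(q):q\in Q\}$. Write $a\sim b$ if $a=\lambda b$, $\lambda>0$. For $x$ in the exterior of $M$ let $m_-(x)\in M$ be the unique point with $m_-(x)-x\sim R_M(m_-(x))$, and $T(x)=2m_-(x)-x$ (outer symplectic billiard map). Let $\overline M$ be the symmetrization of $M$, i.e. the boundary of the Minkowski sum of the domain bounded by $M$ and its reflection in the origin (support function $p(v)+p(-v)$ if $p$ is that of $M$), and $N=(\overline M)^*$. Let $H$ be the positively $1$-homogeneous function with $N=\{H=1\}$; it is a norm on $\mathbb{R}^{2d}$. *)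

theory Defs
  imports "HOL-Analysis.Analysis"
begin

text \<open>Phase space R^{2d} is modelled as (real^'d) \<times> (real^'d), with the product
  (Euclidean) inner product. Standard complex structure J(x,y) = (-y,x).\<close>

type_synonym 'd phase = "(real^'d) \<times> (real^'d)"

definition cJ :: "'d::finite phase \<Rightarrow> 'd phase" where
  "cJ u = (- snd u, fst u)"

definition symp :: "'d::finite phase \<Rightarrow> 'd phase \<Rightarrow> real" where
  "symp u v = inner (cJ u) v"

fun Ck :: "nat \<Rightarrow> ('a::euclidean_space \<Rightarrow> real) \<Rightarrow> bool" where
  "Ck 0 f = continuous_on UNIV f"
| "Ck (Suc k) f = (f differentiable_on UNIV \<and> continuous_on UNIV f \<and>
      (\<forall>v. Ck k (\<lambda>x. frechet_derivative f (at x) v)))"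

definition smooth_fun :: "('a::euclidean_space \<Rightarrow> real) \<Rightarrow> bool" where
  "smooth_fun f \<longleftrightarrow> (\<forall>k. Ck k f)"

definition posdef_hessian :: "('a::euclidean_space \<Rightarrow> real) \<Rightarrow> bool" where
  "posdef_hessian f \<longleftrightarrow> (\<forall>x v. v \<noteq> 0 \<longrightarrow>
     frechet_derivative (\<lambda>y. frechet_derivative f (at y) v) (at x) v > 0)"

definition tangent_space :: "'a::euclidean_space set \<Rightarrow> 'a \<Rightarrow> 'a set" where
  "tangent_space Q q = {v. \<exists>\<gamma> e. e > 0 \<and> \<gamma> 0 = q \<and>
      (\<forall>t\<in>{-e<..<e}. \<gamma> t \<in> Q) \<and> (\<gamma> has_vector_derivative v) (at 0)}"

definition reeb :: "'d::finite phase set \<Rightarrow> 'd phase \<Rightarrow> 'd phase" where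
  "reeb Q q = (THE r. (\<forall>v\<in>tangent_space Q q. symp v r = 0) \<and> symp q r = 1)"

definition symp_polar :: "'d::finite phase set \<Rightarrow> 'd phase set" where
  "symp_polar Q = reeb Q ` Q"

definition m_minus :: "'d::finite phase set \<Rightarrow> 'd phase \<Rightarrow> 'd phase" where
  "m_minus M x = (THE m. m \<in> M \<and> (\<exists>l>0. m - x = l *\<^sub>R reeb M m))"

definition osb_map :: "'d::finite phase set \<Rightarrow> 'd phase \<Rightarrow> 'd phase" where
  "osb_map M x = 2 *\<^sub>R m_minus M x - x"

text \<open>Symmetrization: boundary of K + (-K), K the convex domain bounded by M
  (= convex hull of M).\<close>
definition symmetrization :: "'d::finite phase set \<Rightarrow> 'd phase set" where
  "symmetrization M = frontier {a - b | a b. a \<in> convex hull M \<and> b \<in> convex hull M}"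

text \<open>H: the positively 1-homogeneous function with {H = 1} = N.\<close>
definition gauge_of :: "'d::finite phase set \<Rightarrow> 'd phase \<Rightarrow> real" where
  "gauge_of N x = (if x = 0 then 0 else (THE t. t > 0 \<and> (1 / t) *\<^sub>R x \<in> N))"

definition Hfun :: "'d::finite phase set \<Rightarrow> 'd phase \<Rightarrow> real" where
  "Hfun M = gauge_of (symp_polar (symmetrization M))"

end

theory Submission
  imports Defs
begin

text \<open>
  \<open>H(x)\<close> is the support function of the difference body \<open>D - D\<close> evaluated at \<open>-J x\<close>, the
  width of \<open>D\<close> in that direction. The positive definite Hessian makes \<open>M\<close> strongly convex,
  so the inverse of its Gauss map is Lipschitz. Far from \<open>D\<close>, the two reflection points of
  \<open>T\<^sup>2\<close> therefore lie within \<open>O(1/|x|)\<close> of the support points of \<open>D\<close> in the directions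
  \<open>\<plusminus>J x\<close>, and \<open>T\<^sup>2\<close> moves \<open>-J x\<close> by a bounded vector that is almost orthogonal to the
  subgradient of the width. Hence \<open>H\<close> changes by \<open>O(1/|x|)\<close> and \<open>H\<^sup>2\<close> by \<open>O(1)\<close> per double step,
  and the bound follows by summing over \<open>k\<close> double steps.

  Existence of \<open>m\<^sub>-(x)\<close> comes from invariance of domain: the map sending \<open>p + r \<nu>(p)\<close>, with
  \<open>\<nu>(p)\<close> the outer normal, to \<open>p - r R(p)\<close> is a continuous injection of the connected exterior
  of \<open>D\<close> into itself with relatively closed image, hence onto.
\<close>

section \<open>Calculus and convex geometry\<close>

lemma taylor_second_order_lower_bound:
  fixes \<phi> \<psi> \<kappa> :: "real \<Rightarrow> real"
  assumes d1: "\<And>t. t \<in> {0..1} \<Longrightarrow> (\<phi> has_real_derivative \<psi> t) (at t)"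
    and d2: "\<And>t. t \<in> {0..1} \<Longrightarrow> (\<psi> has_real_derivative \<kappa> t) (at t)"
    and lb: "\<And>t. t \<in> {0..1} \<Longrightarrow> \<kappa> t \<ge> \<beta>"
  shows "\<phi> 1 \<ge> \<phi> 0 + \<psi> 0 + \<beta> / 2"
proof -
  have \<psi>_lb: "\<psi> 0 + \<beta> * t \<le> \<psi> t" if "t \<in> {0..1}" for t
  proof -
    have "(\<lambda>s. \<psi> s - \<beta> * s) 0 \<le> (\<lambda>s. \<psi> s - \<beta> * s) t"
    proof (rule DERIV_nonneg_imp_nondecreasing[of 0 t])
      fix s assume "0 \<le> s" "s \<le> t"
      with that have s: "s \<in> {0..1}" by auto
      have "((\<lambda>s. \<psi> s - \<beta> * s) has_real_derivative \<kappa> s - \<beta>) (at s)"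
        by (auto intro!: derivative_eq_intros d2[OF s])
      with lb[OF s] show "\<exists>y. ((\<lambda>s. \<psi> s - \<beta> * s) has_real_derivative y) (at s) \<and> 0 \<le> y"
        by auto
    qed (use that in auto)
    then show ?thesis by simp
  qed
  have "(\<lambda>s. \<phi> s - s * \<psi> 0 - \<beta> * s^2 / 2) 0 \<le> (\<lambda>s. \<phi> s - s * \<psi> 0 - \<beta> * s^2 / 2) 1"
  proof (rule DERIV_nonneg_imp_nondecreasing[of 0 1])
    fix s :: real assume "0 \<le> s" "s \<le> 1"
    then have s: "s \<in> {0..1}" by auto
    have "((\<lambda>s. \<phi> s - s * \<psi> 0 - \<beta> * s^2 / 2) has_real_derivative \<psi> s - \<psi> 0 - \<beta> * s) (at s)"
      by (rule derivative_eq_intros d1[OF s] | simp)+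
    with \<psi>_lb[OF s]
    show "\<exists>y. ((\<lambda>s. \<phi> s - s * \<psi> 0 - \<beta> * s^2 / 2) has_real_derivative y) (at s) \<and> 0 \<le> y"
      by auto
  qed simp
  then show ?thesis by simp
qed

lemma has_real_derivative_along_line:
  fixes g :: "'a::real_normed_vector \<Rightarrow> real"
  assumes "(g has_derivative g') (at (a + t *\<^sub>R w))"
  shows "((\<lambda>s. g (a + s *\<^sub>R w)) has_real_derivative g' w) (at t)"
proof -
  have "((\<lambda>s. a + s *\<^sub>R w) has_derivative (\<lambda>s. s *\<^sub>R w)) (at t)"
    by (auto intro!: derivative_eq_intros)
  from has_derivative_compose[OF this assms]
  have "((\<lambda>s. g (a + s *\<^sub>R w)) has_derivative (\<lambda>s. g' (s *\<^sub>R w))) (at t)" .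
  moreover have "(\<lambda>s. g' (s *\<^sub>R w)) = (*) (g' w)"
    using linear_scale[OF has_derivative_linear[OF assms]] by (auto simp: mult.commute)
  ultimately show ?thesis unfolding has_field_derivative_def by simp
qed

lemma has_vector_derivative_at_0_iff:
  fixes \<gamma> :: "real \<Rightarrow> 'a::real_normed_vector"
  shows "(\<gamma> has_vector_derivative v) (at 0) \<longleftrightarrow>
    (\<forall>\<epsilon>>0. \<exists>d>0. \<forall>t. \<bar>t\<bar> < d \<longrightarrow> norm (\<gamma> t - \<gamma> 0 - t *\<^sub>R v) \<le> \<epsilon> * \<bar>t\<bar>)"
  unfolding has_vector_derivative_def has_derivative_at_alt
  by (auto intro: bounded_linear_scaleR_left)

lemma orthogonal_complement_imp_parallel:
  fixes \<nu> w :: "'a::real_inner"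
  assumes "\<nu> \<noteq> 0" "\<And>v. \<nu> \<bullet> v = 0 \<Longrightarrow> w \<bullet> v = 0"
  shows "w = ((w \<bullet> \<nu>) / (\<nu> \<bullet> \<nu>)) *\<^sub>R \<nu>"
proof -
  let ?v = "w - ((w \<bullet> \<nu>) / (\<nu> \<bullet> \<nu>)) *\<^sub>R \<nu>"
  have "\<nu> \<bullet> ?v = 0" using assms(1) by (simp add: inner_diff_right inner_commute)
  with assms(2) have "?v \<bullet> ?v = 0" by (simp add: inner_diff_left)
  then show ?thesis by simp
qed

lemma norm_sgn_diff_le:
  fixes a b :: "'a::real_normed_vector"
  assumes "b \<noteq> 0"
  shows "norm (sgn a - sgn b) \<le> 2 * norm (a - b) / norm b"
proof (cases "a = 0")
  case True
  with assms show ?thesis by (simp add: norm_sgn)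
next
  case False
  have nb: "norm b > 0" using assms by simp
  have "sgn a - sgn b = (1 / norm a - 1 / norm b) *\<^sub>R a + (1 / norm b) *\<^sub>R (a - b)"
    by (simp add: sgn_div_norm divide_inverse_commute algebra_simps)
  then have "norm (sgn a - sgn b) \<le> \<bar>1 / norm a - 1 / norm b\<bar> * norm a + norm (a - b) / norm b"
    using norm_triangle_ineq[of "(1 / norm a - 1 / norm b) *\<^sub>R a" "(1 / norm b) *\<^sub>R (a - b)"]
    by simp
  moreover have "\<bar>1 / norm a - 1 / norm b\<bar> * norm a = \<bar>norm b - norm a\<bar> / norm b"
    using False nb by (simp add: field_simps abs_divide abs_mult)
  moreover have "\<bar>norm b - norm a\<bar> / norm b \<le> norm (a - b) / norm b"
    using norm_triangle_ineq3[of a b] nb by (simp add: abs_minus_commute divide_right_mono)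
  ultimately show ?thesis by simp
qed

lemma frontier_ray_scale_ge:
  fixes S :: "'a::euclidean_space set"
  assumes "convex S" "closed S" "0 \<in> interior S" "0 < a" "0 < b"
    and "a *\<^sub>R y \<in> S" "b *\<^sub>R y \<in> frontier S"
  shows "a \<le> b"
proof (rule ccontr)
  assume "\<not> a \<le> b"
  have "y \<noteq> 0"
    using assms(3,7) by (auto simp: frontier_def)
  with assms(4,5) \<open>\<not> a \<le> b\<close> have "b *\<^sub>R y \<in> open_segment 0 (a *\<^sub>R y)"
    unfolding in_segment by (intro conjI exI[of _ "b / a"]) auto
  moreover have "open_segment 0 (a *\<^sub>R y) \<subseteq> interior S"
    using in_interior_closure_convex_segment[OF assms(1,3)] assms(2,6) closure_closed by blast
  ultimately show False using assms(7) by (auto simp: frontier_def)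
qed

lemma linear_maximizer_not_interior:
  fixes S :: "'a::euclidean_space set"
  assumes "y \<noteq> 0" "\<forall>z\<in>S. y \<bullet> z \<le> y \<bullet> a"
  shows "a \<notin> interior S"
proof
  assume "a \<in> interior S"
  then obtain e where e: "e > 0" "ball a e \<subseteq> S" using mem_interior by blast
  let ?z = "a + (e / 2 / norm y) *\<^sub>R y"
  have "?z \<in> S" using e assms(1) by (auto simp: dist_norm)
  then have "y \<bullet> ?z \<le> y \<bullet> a" using assms by blast
  moreover have "y \<bullet> ?z = y \<bullet> a + e / 2 * norm y"
    using assms(1) by (simp add: inner_add_right power2_norm_eq_inner[symmetric] power2_eq_square)
  moreover have "e / 2 * norm y > 0" using e assms(1) by simp
  ultimately show False by linarith
qed

lemma convex_frontier_unit_support: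
  fixes S :: "'a::euclidean_space set"
  assumes "convex S" "interior S \<noteq> {}" "q \<in> frontier S"
  obtains \<nu> where "norm \<nu> = 1" "\<forall>z\<in>S. \<nu> \<bullet> z \<le> \<nu> \<bullet> q"
proof -
  have "q \<in> closure S" "q \<notin> rel_interior S"
    using assms(3) rel_interior_nonempty_interior[OF assms(2)] by (auto simp: frontier_def)
  then obtain a where "a \<noteq> 0" and a: "\<And>y. y \<in> closure S \<Longrightarrow> a \<bullet> q \<le> a \<bullet> y"
    using supporting_hyperplane_relative_frontier[OF assms(1)] by metis
  have "\<forall>z\<in>S. sgn (- a) \<bullet> z \<le> sgn (- a) \<bullet> q"
    using a closure_subset \<open>a \<noteq> 0\<close> by (auto simp: sgn_div_norm divide_right_mono)
  moreover have "norm (sgn (- a)) = 1" using \<open>a \<noteq> 0\<close> by (simp add: norm_sgn)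
  ultimately show ?thesis using that by blast
qed

lemma norm_le_norm_diff_if_inner_nonpos:
  fixes a b :: "'a::real_inner"
  assumes "a \<bullet> b \<le> 0"
  shows "norm a \<le> norm (a - b)"
proof -
  have "(norm (a - b))^2 = (norm a)^2 - 2 * (a \<bullet> b) + (norm b)^2"
    by (simp add: power2_norm_eq_inner inner_diff_left inner_diff_right inner_commute)
  then have "(norm a)^2 \<le> (norm (a - b))^2" using assms zero_le_power2[of "norm b"] by linarith
  then show ?thesis by (rule power2_le_imp_le) simp
qed

lemma convex_shrink_mem_near:
  fixes S :: "'a::real_normed_vector set"
  assumes "convex S" "cball 0 \<rho> \<subseteq> S" "z \<in> S" "\<theta> > 0" "norm (y - z) \<le> \<theta> * \<rho>"
  shows "(1 / (1 + \<theta>)) *\<^sub>R y \<in> S"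
proof -
  have "norm ((1 / \<theta>) *\<^sub>R (y - z)) \<le> \<rho>"
    using assms(4,5) by (simp add: divide_le_eq mult.commute del: scaleR_right_diff_distrib)
  then have "(1 / \<theta>) *\<^sub>R (y - z) \<in> S"
    using assms(2) by auto
  from convexD[OF assms(1,3) this, of "1 / (1 + \<theta>)" "\<theta> / (1 + \<theta>)"] assms(4)
  show ?thesis by (simp add: field_simps scaleR_diff_right flip: scaleR_add_left)
qed

lemma frontier_ray_scale_deviation:
  fixes S :: "'a::euclidean_space set"
  assumes "convex S" "closed S" "\<rho> > 0" "cball 0 \<rho> \<subseteq> S"
    and "0 < \<sigma>" "\<sigma> \<le> 1" "\<sigma> *\<^sub>R y \<in> frontier S"
    and "z \<in> S" "\<theta> > 0" "norm (y - z) \<le> \<theta> * \<rho>"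
  shows "norm (\<sigma> *\<^sub>R y - y) \<le> \<theta> * norm y"
proof -
  have "0 \<in> interior S"
    using assms(3,4) interior_mono interior_cball by (metis centre_in_ball subsetD)
  have "1 / (1 + \<theta>) \<le> \<sigma>"
    using frontier_ray_scale_ge[OF assms(1,2) \<open>0 \<in> interior S\<close> _ assms(5)]
      convex_shrink_mem_near[OF assms(1,4,8,9,10)] assms(7,9) by simp
  moreover have "1 - 1 / (1 + \<theta>) \<le> \<theta>"
    using assms(9) by (simp add: field_simps)
  ultimately have "1 - \<sigma> \<le> \<theta>" by linarith
  moreover have "\<sigma> *\<^sub>R y - y = - ((1 - \<sigma>) *\<^sub>R y)" by (simp add: algebra_simps)
  ultimately show ?thesis using assms(6) by (simp add: mult_right_mono)
qed

lemma iterate_increment_bound: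
  fixes g :: "'a \<Rightarrow> real"
  assumes "\<And>z. z \<in> S \<Longrightarrow> f z \<in> S" "\<And>z. z \<in> S \<Longrightarrow> \<bar>g (f z) - g z\<bar> \<le> C" "x \<in> S"
  shows "(f ^^ k) x \<in> S \<and> \<bar>g ((f ^^ k) x) - g x\<bar> \<le> C * real k"
proof (induction k)
  case 0
  then show ?case using assms(3) by simp
next
  case (Suc k)
  then have "(f ^^ k) x \<in> S" by blast
  with assms(1,2)[of "(f ^^ k) x"] Suc.IH show ?case by (simp add: algebra_simps abs_le_iff)
qed

section \<open>Tangent spaces and Reeb vectors of convex frontiers\<close>

lemma tangent_space_orthogonal_to_support:
  fixes Q S :: "'a::euclidean_space set"
  assumes "Q \<subseteq> S" "\<forall>z\<in>S. \<nu> \<bullet> (z - q) \<le> 0" "v \<in> tangent_space Q q"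
  shows "\<nu> \<bullet> v = 0"
proof -
  obtain \<gamma> e where e: "e > 0" "\<gamma> 0 = q" "\<forall>t\<in>{-e<..<e}. \<gamma> t \<in> Q"
    and d: "(\<gamma> has_vector_derivative v) (at 0)"
    using assms(3) unfolding tangent_space_def by blast
  have "((\<lambda>t. \<nu> \<bullet> \<gamma> t) has_derivative (\<lambda>t. \<nu> \<bullet> (t *\<^sub>R v))) (at 0)"
    using d unfolding has_vector_derivative_def by (rule has_derivative_inner_right)
  moreover have "(\<lambda>t. \<nu> \<bullet> (t *\<^sub>R v)) = (*) (\<nu> \<bullet> v)" by (auto simp: mult.commute)
  ultimately have "((\<lambda>t. \<nu> \<bullet> \<gamma> t) has_real_derivative (\<nu> \<bullet> v)) (at 0)"
    unfolding has_field_derivative_def by simp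
  then show ?thesis
  proof (rule DERIV_local_max[OF _ e(1)], intro allI impI)
    fix t :: real assume "\<bar>0 - t\<bar> < e"
    then have "\<gamma> t \<in> S" using e assms(1) by (auto simp: abs_less_iff)
    then show "\<nu> \<bullet> \<gamma> t \<le> \<nu> \<bullet> \<gamma> 0" using assms(2) e(2) by (auto simp: inner_diff_right)
  qed
qed

lemma cball_support_ge:
  fixes S :: "'a::real_inner set"
  assumes "0 \<le> \<rho>" "cball 0 \<rho> \<subseteq> S" "\<forall>z\<in>S. \<nu> \<bullet> z \<le> \<nu> \<bullet> q"
  shows "\<rho> * norm \<nu> \<le> \<nu> \<bullet> q"
proof (cases "\<nu> = 0")
  case True
  then show ?thesis by simp
next
  case False
  then have "(\<rho> / norm \<nu>) *\<^sub>R \<nu> \<in> S" using assms(1,2) by auto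
  then show ?thesis
    using assms(3) False by (force simp: power2_norm_eq_inner[symmetric] power2_eq_square)
qed

lemma radial_projection_of_support_line:
  fixes S :: "'a::euclidean_space set"
  assumes convex: "convex S" and compact: "compact S" and int0: "0 \<in> interior S"
    and q: "q \<in> frontier S" and sup: "\<forall>z\<in>S. \<nu> \<bullet> z \<le> \<nu> \<bullet> q" and "\<nu> \<bullet> q > 0" and "\<nu> \<bullet> v = 0"
  obtains \<sigma> where "\<And>t. \<sigma> t > 0" "\<And>t. \<sigma> t *\<^sub>R (q + t *\<^sub>R v) \<in> frontier S"
    "\<And>t. \<sigma> t \<le> 1" "\<sigma> 0 = 1"
proof -
  have closed: "closed S" and "bounded S"
    using compact by (auto intro: compact_imp_closed compact_imp_bounded)
  have \<nu>_line: "\<nu> \<bullet> (q + t *\<^sub>R v) = \<nu> \<bullet> q" for t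
    using \<open>\<nu> \<bullet> v = 0\<close> by (simp add: inner_add_right)
  have "\<forall>t. \<exists>s>0. s *\<^sub>R (q + t *\<^sub>R v) \<in> frontier S"
  proof
    fix t
    have "q + t *\<^sub>R v \<noteq> 0" using \<open>\<nu> \<bullet> q > 0\<close> \<nu>_line[of t] by auto
    from ray_to_frontier[OF \<open>bounded S\<close> int0 this] show "\<exists>s>0. s *\<^sub>R (q + t *\<^sub>R v) \<in> frontier S"
      by auto
  qed
  then obtain \<sigma> where \<sigma>_pos: "\<And>t. \<sigma> t > 0" and \<sigma>_fr: "\<And>t. \<sigma> t *\<^sub>R (q + t *\<^sub>R v) \<in> frontier S"
    by metis
  have \<sigma>_le: "\<sigma> t \<le> 1" for t
  proof -
    have "\<sigma> t *\<^sub>R (q + t *\<^sub>R v) \<in> S" using \<sigma>_fr closed frontier_subset_closed by blast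
    then have "\<sigma> t * (\<nu> \<bullet> q) \<le> 1 * (\<nu> \<bullet> q)" using sup \<nu>_line[of t] by fastforce
    then show ?thesis using \<open>\<nu> \<bullet> q > 0\<close> by (simp add: mult_le_cancel_right)
  qed
  have "q \<in> S" using q closed frontier_subset_closed by blast
  then have "1 \<le> \<sigma> 0"
    using frontier_ray_scale_ge[OF convex closed int0, of 1 "\<sigma> 0" q] \<sigma>_pos \<sigma>_fr[of 0] by simp
  with \<sigma>_le have "\<sigma> 0 = 1" by (simp add: antisym)
  with \<sigma>_pos \<sigma>_fr \<sigma>_le show ?thesis using that by blast
qed

text \<open>The curve exhibiting \<open>v\<close> as a tangent vector is the radial projection of the line
  \<open>q + t v\<close> to the frontier; the hypothesis on nearby points of \<open>S\<close> makes the projection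
  factor \<open>1 - o(t)\<close>.\<close>

lemma tangent_space_frontier_convexI:
  fixes S :: "'a::euclidean_space set"
  assumes convex: "convex S" and compact: "compact S" and "\<rho> > 0" and ball: "cball 0 \<rho> \<subseteq> S"
    and q: "q \<in> frontier S" and sup: "\<forall>z\<in>S. \<nu> \<bullet> z \<le> \<nu> \<bullet> q" and "\<nu> \<noteq> 0" and "\<nu> \<bullet> v = 0"
    and near: "\<And>\<epsilon>. \<epsilon> > 0 \<Longrightarrow>
      \<exists>d>0. \<forall>t. 0 < \<bar>t\<bar> \<and> \<bar>t\<bar> < d \<longrightarrow> (\<exists>z\<in>S. norm (z - (q + t *\<^sub>R v)) \<le> \<epsilon> * \<bar>t\<bar>)"
  shows "v \<in> tangent_space (frontier S) q"
proof -
  have closed: "closed S" using compact by (rule compact_imp_closed)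
  have int0: "0 \<in> interior S"
    using \<open>\<rho> > 0\<close> ball interior_mono interior_cball by (metis centre_in_ball subsetD)
  have "\<nu> \<bullet> q > 0"
    using cball_support_ge[OF less_imp_le[OF \<open>\<rho> > 0\<close>] ball sup] \<open>\<rho> > 0\<close> \<open>\<nu> \<noteq> 0\<close>
    by (smt (verit) mult_pos_pos zero_less_norm_iff)
  obtain \<sigma> where \<sigma>_pos: "\<And>t. \<sigma> t > 0" and \<sigma>_fr: "\<And>t. \<sigma> t *\<^sub>R (q + t *\<^sub>R v) \<in> frontier S"
    and \<sigma>_le: "\<And>t. \<sigma> t \<le> 1" and \<sigma>0: "\<sigma> 0 = 1"
    using radial_projection_of_support_line[OF convex compact int0 q sup \<open>\<nu> \<bullet> q > 0\<close> \<open>\<nu> \<bullet> v = 0\<close>]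
    by blast
  define \<gamma> where "\<gamma> t = \<sigma> t *\<^sub>R (q + t *\<^sub>R v)" for t
  have "(\<gamma> has_vector_derivative v) (at 0)"
    unfolding has_vector_derivative_at_0_iff
  proof (intro allI impI)
    fix \<epsilon> :: real assume "\<epsilon> > 0"
    define K where "K = norm q + norm v + 1"
    have "K > 0" by (simp add: K_def add_nonneg_pos)
    obtain d where "d > 0" and d: "\<And>t. 0 < \<bar>t\<bar> \<Longrightarrow> \<bar>t\<bar> < d \<Longrightarrow>
        \<exists>z\<in>S. norm (z - (q + t *\<^sub>R v)) \<le> (\<epsilon> * \<rho> / K) * \<bar>t\<bar>"
      using near[of "\<epsilon> * \<rho> / K"] \<open>\<epsilon> > 0\<close> \<open>\<rho> > 0\<close> \<open>K > 0\<close> by auto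
    have "norm (\<gamma> t - \<gamma> 0 - t *\<^sub>R v) \<le> \<epsilon> * \<bar>t\<bar>" if t: "\<bar>t\<bar> < min d 1" for t
    proof (cases "t = 0")
      case True
      then show ?thesis by simp
    next
      case False
      let ?y = "q + t *\<^sub>R v"
      obtain z where "z \<in> S" and z: "norm (z - ?y) \<le> (\<epsilon> * \<rho> / K) * \<bar>t\<bar>"
        using d False t by auto
      have "norm (?y - z) \<le> (\<epsilon> * \<bar>t\<bar> / K) * \<rho>"
        using z by (simp add: norm_minus_commute field_simps)
      from frontier_ray_scale_deviation[OF convex closed \<open>\<rho> > 0\<close> ball \<sigma>_pos \<sigma>_le \<sigma>_fr \<open>z \<in> S\<close> _ this]
      have "norm (\<gamma> t - \<gamma> 0 - t *\<^sub>R v) \<le> (\<epsilon> * \<bar>t\<bar> / K) * norm ?y"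
        using \<open>\<epsilon> > 0\<close> \<open>K > 0\<close> False by (simp add: \<gamma>_def \<sigma>0 algebra_simps)
      also have "\<dots> \<le> (\<epsilon> * \<bar>t\<bar> / K) * K"
        using t norm_triangle_ineq[of q "t *\<^sub>R v"] mult_left_le_one_le[of "norm v" "\<bar>t\<bar>"]
          \<open>\<epsilon> > 0\<close> \<open>K > 0\<close> by (intro mult_left_mono) (simp_all add: K_def)
      finally show ?thesis using \<open>K > 0\<close> by simp
    qed
    then show "\<exists>d>0. \<forall>t. \<bar>t\<bar> < d \<longrightarrow> norm (\<gamma> t - \<gamma> 0 - t *\<^sub>R v) \<le> \<epsilon> * \<bar>t\<bar>"
      using \<open>d > 0\<close> by (intro exI[of _ "min d 1"]) auto
  qed
  moreover have "\<gamma> 0 = q" "\<And>t. \<gamma> t \<in> frontier S" by (simp_all add: \<gamma>_def \<sigma>0 \<sigma>_fr)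
  ultimately show ?thesis unfolding tangent_space_def using zero_less_one by blast
qed

lemma cJ_simps:
  fixes u v :: "'d::finite phase"
  shows "cJ (cJ u) = - u" "cJ u \<bullet> cJ v = u \<bullet> v" "cJ u \<bullet> u = 0" "u \<bullet> cJ u = 0"
    "cJ u \<bullet> v = - (u \<bullet> cJ v)" "norm (cJ u) = norm u" "cJ (a *\<^sub>R u) = a *\<^sub>R cJ u"
    "cJ (u + v) = cJ u + cJ v" "cJ (u - v) = cJ u - cJ v" "cJ (- u) = - cJ u" "cJ 0 = 0"
  by (auto simp: cJ_def inner_prod_def norm_prod_def inner_commute prod_eq_iff)

lemma continuous_on_cJ: "continuous_on S (cJ :: 'd::finite phase \<Rightarrow> 'd phase)"
  unfolding cJ_def[abs_def] by (intro continuous_intros)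

lemma reeb_eq_of_tangent_space:
  fixes Q :: "'d::finite phase set"
  assumes ts: "tangent_space Q q = {v. \<nu> \<bullet> v = 0}" and "\<nu> \<noteq> 0" and "\<nu> \<bullet> q \<noteq> 0"
  shows "reeb Q q = (1 / (\<nu> \<bullet> q)) *\<^sub>R cJ \<nu>"
  unfolding reeb_def
proof (rule the_equality)
  show "(\<forall>v\<in>tangent_space Q q. symp v ((1 / (\<nu> \<bullet> q)) *\<^sub>R cJ \<nu>) = 0) \<and>
      symp q ((1 / (\<nu> \<bullet> q)) *\<^sub>R cJ \<nu>) = 1"
    using ts \<open>\<nu> \<bullet> q \<noteq> 0\<close> by (auto simp: symp_def cJ_simps inner_commute)
next
  fix r assume r: "(\<forall>v\<in>tangent_space Q q. symp v r = 0) \<and> symp q r = 1"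
  have "cJ r \<bullet> v = 0" if "\<nu> \<bullet> v = 0" for v
  proof -
    have "symp v r = 0" using r ts that by blast
    then show ?thesis using cJ_simps(5)[of r v] by (simp add: symp_def inner_commute)
  qed
  then have "cJ r = ((cJ r \<bullet> \<nu>) / (\<nu> \<bullet> \<nu>)) *\<^sub>R \<nu>"
    by (rule orthogonal_complement_imp_parallel[OF \<open>\<nu> \<noteq> 0\<close>])
  then have "r = - cJ (((cJ r \<bullet> \<nu>) / (\<nu> \<bullet> \<nu>)) *\<^sub>R \<nu>)"
    by (simp add: cJ_simps(1) flip: \<open>cJ r = _\<close>)
  then obtain l where rl: "r = l *\<^sub>R cJ \<nu>"
    by (auto simp: cJ_simps(7) simp flip: scaleR_minus_left)
  have "1 = l * (\<nu> \<bullet> q)" using r by (simp add: rl symp_def cJ_simps inner_commute)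
  then have "l = 1 / (\<nu> \<bullet> q)" using \<open>\<nu> \<bullet> q \<noteq> 0\<close> by (simp add: eq_divide_eq)
  with rl show "r = (1 / (\<nu> \<bullet> q)) *\<^sub>R cJ \<nu>" by simp
qed

lemma gauge_of_eqI:
  assumes "x \<noteq> 0" "t > 0" "(1 / t) *\<^sub>R x \<in> N" "\<And>s. s > 0 \<Longrightarrow> (1 / s) *\<^sub>R x \<in> N \<Longrightarrow> s = t"
  shows "gauge_of N x = t"
proof -
  have "(THE t. t > 0 \<and> (1 / t) *\<^sub>R x \<in> N) = t"
    by (rule the_equality) (use assms in blast)+
  then show ?thesis using assms(1) by (simp add: gauge_of_def)
qed

section \<open>Strongly convex level sets\<close>

declare split_paired_All[simp del] split_paired_Ex[simp del]

locale convex_level_body =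
  fixes M D :: "'d::finite phase set" and F :: "'d phase \<Rightarrow> real" and c :: real
  assumes compact_D: "compact D" and convex_D: "convex D" and zero_interior: "0 \<in> interior D"
    and M_frontier: "M = frontier D" and smooth_F: "smooth_fun F" and posdef_F: "posdef_hessian F"
    and M_level: "M = {x. F x = c}"
    and DF_nonzero: "\<And>q. q \<in> M \<Longrightarrow> frechet_derivative F (at q) \<noteq> (\<lambda>_. 0)"
begin

abbreviation "DF x \<equiv> frechet_derivative F (at x)"
abbreviation "D2 x v \<equiv> frechet_derivative (\<lambda>y. DF y v) (at x)"

lemma F_twice_differentiable:
  "F differentiable_on UNIV" "(\<lambda>y. DF y v) differentiable_on UNIV"
  "continuous_on UNIV (\<lambda>y. DF y v)" "continuous_on UNIV (\<lambda>x. D2 x v w)"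
proof -
  have "Ck (Suc (Suc 0)) F" using smooth_F unfolding smooth_fun_def by blast
  then show "F differentiable_on UNIV" "(\<lambda>y. DF y v) differentiable_on UNIV"
    "continuous_on UNIV (\<lambda>y. DF y v)" "continuous_on UNIV (\<lambda>x. D2 x v w)"
    by (simp_all only: Ck.simps simp_thms)
qed

lemma has_derivative_F: "(F has_derivative DF x) (at x)"
  using F_twice_differentiable(1) frechet_derivative_works by (blast dest: differentiable_onD)

lemma has_derivative_DF: "((\<lambda>y. DF y v) has_derivative D2 x v) (at x)"
  using F_twice_differentiable(2) frechet_derivative_works by (blast dest: differentiable_onD)

lemma linear_DF: "linear (DF x)"
  using has_derivative_F has_derivative_linear by blast

lemma linear_D2: "linear (D2 x v)"
  using has_derivative_DF has_derivative_linear by blast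

lemma D2_nonneg: "D2 x w w \<ge> 0"
proof (cases "w = 0")
  case True
  then show ?thesis using linear_0[OF linear_D2] by simp
next
  case False
  then show ?thesis using posdef_F unfolding posdef_hessian_def by (simp add: less_imp_le)
qed

lemma F_taylor_lower_bound:
  assumes "\<And>t. t \<in> {0..1} \<Longrightarrow> D2 (a + t *\<^sub>R (z - a)) (z - a) (z - a) \<ge> \<beta>"
  shows "F z \<ge> F a + DF a (z - a) + \<beta> / 2"
proof -
  let ?w = "z - a"
  have "(\<lambda>s. F (a + s *\<^sub>R ?w)) 1 \<ge>
      (\<lambda>s. F (a + s *\<^sub>R ?w)) 0 + (\<lambda>s. DF (a + s *\<^sub>R ?w) ?w) 0 + \<beta> / 2"
  proof (rule taylor_second_order_lower_bound)
    fix t :: real assume "t \<in> {0..1}"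
    show "((\<lambda>s. F (a + s *\<^sub>R ?w)) has_real_derivative DF (a + t *\<^sub>R ?w) ?w) (at t)"
      by (rule has_real_derivative_along_line[OF has_derivative_F])
    show "((\<lambda>s. DF (a + s *\<^sub>R ?w) ?w) has_real_derivative D2 (a + t *\<^sub>R ?w) ?w ?w) (at t)"
      by (rule has_real_derivative_along_line[OF has_derivative_DF])
    show "D2 (a + t *\<^sub>R ?w) ?w ?w \<ge> \<beta>" using assms \<open>t \<in> {0..1}\<close> by blast
  qed
  then show ?thesis by simp
qed

lemma F_convex_combination_le:
  assumes "0 \<le> u" "u \<le> 1"
  shows "F (u *\<^sub>R x + (1 - u) *\<^sub>R y) \<le> u * F x + (1 - u) * F y"
proof -
  let ?p = "u *\<^sub>R x + (1 - u) *\<^sub>R y"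
  have tangent: "F z \<ge> F ?p + DF ?p (z - ?p)" for z
    using F_taylor_lower_bound[where \<beta> = 0 and a = ?p and z = z] D2_nonneg by simp
  have "u * DF ?p (x - ?p) + (1 - u) * DF ?p (y - ?p) =
      DF ?p (u *\<^sub>R (x - ?p) + (1 - u) *\<^sub>R (y - ?p))"
    by (simp only: linear_add[OF linear_DF] linear_scale[OF linear_DF] real_scaleR_def)
  also have "u *\<^sub>R (x - ?p) + (1 - u) *\<^sub>R (y - ?p) = 0"
    by (simp add: algebra_simps)
  finally have "u * DF ?p (x - ?p) + (1 - u) * DF ?p (y - ?p) = 0"
    by (simp add: linear_0[OF linear_DF])
  moreover have "u * F x \<ge> u * (F ?p + DF ?p (x - ?p))"
    using tangent[of x] assms by (simp add: mult_left_mono)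
  moreover have "(1 - u) * F y \<ge> (1 - u) * (F ?p + DF ?p (y - ?p))"
    using tangent[of y] assms by (simp add: mult_left_mono)
  ultimately show ?thesis by (simp add: algebra_simps)
qed

lemma D2_eq_sum_Basis: "D2 x w h = (\<Sum>i\<in>Basis. \<Sum>j\<in>Basis. (w \<bullet> i) * (h \<bullet> j) * D2 x i j)"
proof -
  have lin_Basis: "L v = (\<Sum>i\<in>Basis. (v \<bullet> i) * L i)" if "linear L" for L :: "'d phase \<Rightarrow> real" and v
  proof -
    have "L v = (\<Sum>i\<in>Basis. L ((v \<bullet> i) *\<^sub>R i))"
      by (subst euclidean_representation[symmetric, of v]) (rule linear_sum[OF that])
    then show ?thesis using linear_scale[OF that] by simp
  qed
  have "((\<lambda>y. \<Sum>i\<in>Basis. (w \<bullet> i) * DF y i) has_derivative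
      (\<lambda>k. \<Sum>i\<in>Basis. (w \<bullet> i) * D2 x i k)) (at x)"
    by (intro has_derivative_sum has_derivative_mult_right has_derivative_DF)
  moreover have "(\<lambda>y. DF y w) = (\<lambda>y. \<Sum>i\<in>Basis. (w \<bullet> i) * DF y i)"
    using lin_Basis[OF linear_DF] by (rule ext)
  ultimately have "((\<lambda>y. DF y w) has_derivative (\<lambda>k. \<Sum>i\<in>Basis. (w \<bullet> i) * D2 x i k)) (at x)"
    by (simp only:)
  then have "D2 x w = (\<lambda>k. \<Sum>i\<in>Basis. (w \<bullet> i) * D2 x i k)"
    by (rule frechet_derivative_at[symmetric])
  moreover have "D2 x i h = (\<Sum>j\<in>Basis. (h \<bullet> j) * D2 x i j)" for i
    by (rule lin_Basis[OF linear_D2])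
  ultimately show ?thesis by (simp add: sum_distrib_left mult.assoc)
qed

lemma hessian_uniformly_positive: "\<exists>\<alpha>>0. \<forall>x\<in>D. \<forall>w. D2 x w w \<ge> \<alpha> * (norm w)^2"
proof -
  let ?Q = "\<lambda>p. D2 (fst p) (snd p) (snd p)"
  have "continuous_on (D \<times> sphere 0 1) (\<lambda>p. D2 (fst p) i j)" for i j
    by (rule continuous_on_compose2[OF F_twice_differentiable(4) continuous_on_fst]) auto
  then have "continuous_on (D \<times> sphere 0 1)
      (\<lambda>p. \<Sum>i\<in>Basis. \<Sum>j\<in>Basis. (snd p \<bullet> i) * (snd p \<bullet> j) * D2 (fst p) i j)"
    by (intro continuous_intros)
  then have "continuous_on (D \<times> sphere 0 1) ?Q"
    by (rule continuous_on_eq) (rule D2_eq_sum_Basis[symmetric])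
  moreover have "compact (D \<times> sphere (0::'d phase) 1)" using compact_D by (simp add: compact_Times)
  moreover obtain u :: "'d phase" where "norm u = 1" using vector_choose_size zero_le_one by blast
  then have "(0, u) \<in> D \<times> sphere 0 1" using zero_interior interior_subset by auto
  ultimately obtain p0 where p0: "p0 \<in> D \<times> sphere 0 1"
    and min: "\<And>p. p \<in> D \<times> sphere 0 1 \<Longrightarrow> ?Q p0 \<le> ?Q p"
    using continuous_attains_inf[of "D \<times> sphere 0 1" ?Q] by blast
  have "snd p0 \<noteq> 0" using p0 by (auto simp: mem_Times_iff)
  then have "?Q p0 > 0" using posdef_F unfolding posdef_hessian_def by blast
  moreover have "D2 x w w \<ge> ?Q p0 * (norm w)^2" if "x \<in> D" for x w
  proof (cases "w = 0")
    case True
    then show ?thesis using linear_0[OF linear_D2] by simp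
  next
    case False
    have "?Q p0 \<le> D2 x (sgn w) (sgn w)"
      using min[of "(x, sgn w)"] that False by (simp add: norm_sgn)
    also have "D2 x (sgn w) (sgn w) =
        (\<Sum>i\<in>Basis. \<Sum>j\<in>Basis. (sgn w \<bullet> i) * (sgn w \<bullet> j) * D2 x i j)"
      by (rule D2_eq_sum_Basis)
    also have "\<dots> = (\<Sum>i\<in>Basis. \<Sum>j\<in>Basis. (w \<bullet> i) * (w \<bullet> j) * D2 x i j) / (norm w)^2"
      by (simp add: sgn_div_norm sum_divide_distrib power2_eq_square divide_inverse mult_ac sum_distrib_left)
    also have "\<dots> = D2 x w w / (norm w)^2"
      using D2_eq_sum_Basis[where x = x and w = w and h = w] by simp
    finally show ?thesis using False by (simp add: field_simps)
  qed
  ultimately show ?thesis by blast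
qed

lemma closed_D: "closed D" and bounded_D: "bounded D"
  using compact_D by (auto intro: compact_imp_closed compact_imp_bounded)

lemma zero_in_D: "0 \<in> D"
  using zero_interior interior_subset by blast

lemma M_subset_D: "M \<subseteq> D"
  using M_frontier closed_D by (simp add: frontier_subset_closed)

lemma compact_M: "compact M"
  using M_frontier compact_D compact_frontier by blast

lemma D_cases: "p \<in> D \<Longrightarrow> p \<in> interior D \<or> p \<in> M"
  using M_frontier closed_D by (auto simp: frontier_def)

lemma M_nonempty: "M \<noteq> {}"
proof -
  obtain u :: "'d phase" where "norm u = 1" using vector_choose_size zero_le_one by blast
  then have "u \<noteq> 0" by auto
  obtain d where "0 + d *\<^sub>R u \<in> frontier D"
    by (rule ray_to_frontier[OF bounded_D zero_interior \<open>u \<noteq> 0\<close>])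
  then show ?thesis using M_frontier by blast
qed

definition inradius :: real where
  "inradius = (SOME r. r > 0 \<and> cball 0 r \<subseteq> D)"

lemma inradius: "inradius > 0" "cball 0 inradius \<subseteq> D"
proof -
  obtain e where "e > 0" "ball 0 e \<subseteq> D" using zero_interior mem_interior by blast
  then have "e / 2 > 0 \<and> cball 0 (e / 2) \<subseteq> D" by auto
  then have "\<exists>r. r > 0 \<and> cball 0 r \<subseteq> D" by blast
  from someI_ex[OF this] show "inradius > 0" "cball 0 inradius \<subseteq> D"
    unfolding inradius_def by auto
qed

definition outradius :: real where
  "outradius = (SOME b. b > 0 \<and> (\<forall>x\<in>D. norm x \<le> b))"

lemma outradius: "outradius > 0" "x \<in> D \<Longrightarrow> norm x \<le> outradius"
proof -
  have "\<exists>b. b > 0 \<and> (\<forall>x\<in>D. norm x \<le> b)" using bounded_D bounded_pos by blast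
  from someI_ex[OF this] show "outradius > 0" "x \<in> D \<Longrightarrow> norm x \<le> outradius"
    unfolding outradius_def by auto
qed

lemma F_less_interior:
  assumes p: "p \<in> interior D"
  shows "F p < c"
proof -
  obtain u :: "'d phase" where "norm u = 1" using vector_choose_size zero_le_one by blast
  then have "u \<noteq> 0" "- u \<noteq> 0" by auto
  obtain d1 where d1: "0 < d1" "p + d1 *\<^sub>R u \<in> frontier D"
    by (rule ray_to_frontier[OF bounded_D p \<open>u \<noteq> 0\<close>])
  obtain d2 where d2: "0 < d2" "p + d2 *\<^sub>R (- u) \<in> frontier D"
    by (rule ray_to_frontier[OF bounded_D p \<open>- u \<noteq> 0\<close>])
  define l where "l = d2 / (d1 + d2)"
  have l: "0 \<le> l" "l \<le> 1" using d1 d2 by (auto simp: l_def)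
  have "l *\<^sub>R (p + d1 *\<^sub>R u) + (1 - l) *\<^sub>R (p + d2 *\<^sub>R (- u)) = p + (l * d1 - (1 - l) * d2) *\<^sub>R u"
    by (simp add: algebra_simps)
  also have "l * d1 - (1 - l) * d2 = 0" using d1 d2 by (simp add: l_def field_simps)
  finally have "F p = F (l *\<^sub>R (p + d1 *\<^sub>R u) + (1 - l) *\<^sub>R (p + d2 *\<^sub>R (- u)))" by simp
  also have "\<dots> \<le> l * F (p + d1 *\<^sub>R u) + (1 - l) * F (p + d2 *\<^sub>R (- u))"
    by (rule F_convex_combination_le[OF l])
  also have "\<dots> = c" using d1(2) d2(2) M_level M_frontier by (simp add: algebra_simps)
  finally have "F p \<le> c" .
  moreover have "F p \<noteq> c" using p M_level M_frontier by (auto simp: frontier_def)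
  ultimately show ?thesis by simp
qed

lemma F_greater_exterior:
  assumes z: "z \<notin> D"
  shows "F z > c"
proof -
  have "z \<noteq> 0" using z zero_in_D by auto
  obtain d where d: "0 < d" "0 + d *\<^sub>R z \<in> frontier D"
    and inner: "\<And>e. 0 \<le> e \<Longrightarrow> e < d \<Longrightarrow> 0 + e *\<^sub>R z \<in> interior D"
    using ray_to_frontier[OF bounded_D zero_interior \<open>z \<noteq> 0\<close>] by blast
  have "d \<noteq> 1" using d(2) z M_frontier M_subset_D by auto
  moreover have "\<not> d > 1" using inner[of 1] z interior_subset by auto
  ultimately have "d < 1" by simp
  have "d *\<^sub>R z \<in> M" using d(2) M_frontier by simp
  then have "c = F (d *\<^sub>R z + (1 - d) *\<^sub>R 0)" using M_level by simp
  also have "\<dots> \<le> d * F z + (1 - d) * F 0"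
    using F_convex_combination_le[of d z 0] \<open>d < 1\<close> d(1) by simp
  also have "\<dots> < d * F z + (1 - d) * c"
    using F_less_interior[OF zero_interior] \<open>d < 1\<close> by simp
  finally show ?thesis using d(1) by (simp add: algebra_simps)
qed

lemma D_eq_sublevel: "D = {z. F z \<le> c}"
proof (intro set_eqI iffI)
  fix z assume "z \<in> D"
  then show "z \<in> {z. F z \<le> c}"
    using D_cases F_less_interior M_level by (fastforce intro: less_imp_le)
qed (use F_greater_exterior in force)

definition grad :: "'d phase \<Rightarrow> 'd phase" where
  "grad q = (\<Sum>i\<in>Basis. DF q i *\<^sub>R i)"

lemma DF_eq_inner_grad: "DF q w = grad q \<bullet> w"
proof -
  have "DF q w = (\<Sum>i\<in>Basis. DF q ((w \<bullet> i) *\<^sub>R i))"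
    by (subst euclidean_representation[symmetric, of w]) (rule linear_sum[OF linear_DF])
  also have "\<dots> = (\<Sum>i\<in>Basis. (DF q i *\<^sub>R i) \<bullet> w)"
    using linear_scale[OF linear_DF] by (intro sum.cong) (simp_all add: inner_commute)
  also have "\<dots> = grad q \<bullet> w"
    by (simp only: grad_def inner_sum_left)
  finally show ?thesis .
qed

lemma continuous_on_grad: "continuous_on S grad"
  unfolding grad_def[abs_def]
  by (intro continuous_intros continuous_on_subset[OF F_twice_differentiable(3)]) auto

lemma grad_nonzero: "q \<in> M \<Longrightarrow> grad q \<noteq> 0"
proof
  assume "q \<in> M" "grad q = 0"
  then have "DF q = (\<lambda>_. 0)" by (intro ext) (simp add: DF_eq_inner_grad)
  with DF_nonzero \<open>q \<in> M\<close> show False by blast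
qed

definition normal :: "'d phase \<Rightarrow> 'd phase" where
  "normal q = sgn (grad q)"

lemma norm_normal: "q \<in> M \<Longrightarrow> norm (normal q) = 1"
  using grad_nonzero by (simp add: normal_def norm_sgn)

lemma continuous_on_normal: "continuous_on M normal"
  unfolding normal_def[abs_def]
  by (intro continuous_on_sgn continuous_on_grad) (auto dest: grad_nonzero)

text \<open>The Hessian bound turns into a quadratic bound for the outer normal because \<open>F\<close> is
  strongly convex on \<open>D\<close> and \<open>|grad F|\<close> is bounded on the compact \<open>M\<close>.\<close>

lemma normal_strong_support_ex:
  "\<exists>\<kappa>>0. \<forall>q\<in>M. \<forall>z\<in>D. normal q \<bullet> (z - q) \<le> - (\<kappa> * (norm (z - q))^2)"
proof -
  obtain \<alpha> where "\<alpha> > 0" and \<alpha>: "\<And>x w. x \<in> D \<Longrightarrow> D2 x w w \<ge> \<alpha> * (norm w)^2"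
    using hessian_uniformly_positive by blast
  have "bounded (grad ` M)"
    by (rule compact_imp_bounded[OF compact_continuous_image[OF continuous_on_grad compact_M]])
  then obtain G where "G > 0" and G: "\<forall>g\<in>grad ` M. norm g \<le> G"
    unfolding bounded_pos by blast
  have "normal q \<bullet> (z - q) \<le> - (\<alpha> / (2 * G) * (norm (z - q))^2)" if "q \<in> M" "z \<in> D" for q z
  proof -
    have "F z \<ge> F q + DF q (z - q) + \<alpha> * (norm (z - q))^2 / 2"
    proof (rule F_taylor_lower_bound)
      fix t :: real assume "t \<in> {0..1}"
      have "q + t *\<^sub>R (z - q) = (1 - t) *\<^sub>R q + t *\<^sub>R z" by (simp add: algebra_simps)
      also have "\<dots> \<in> D"
        using convexD[OF convex_D, of q z "1 - t" t] that M_subset_D \<open>t \<in> {0..1}\<close> by auto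
      finally show "D2 (q + t *\<^sub>R (z - q)) (z - q) (z - q) \<ge> \<alpha> * (norm (z - q))^2" by (rule \<alpha>)
    qed
    moreover have "F q = c" "F z \<le> c" using that M_level D_eq_sublevel by auto
    ultimately have "grad q \<bullet> (z - q) \<le> - (\<alpha> / 2 * (norm (z - q))^2)"
      by (simp add: DF_eq_inner_grad)
    then have "grad q \<bullet> (z - q) / norm (grad q) \<le> - (\<alpha> / 2 * (norm (z - q))^2) / norm (grad q)"
      by (rule divide_right_mono) simp
    also have "\<dots> \<le> - (\<alpha> / 2 * (norm (z - q))^2) / G"
    proof -
      have "(\<alpha> / 2 * (norm (z - q))^2) / G \<le> (\<alpha> / 2 * (norm (z - q))^2) / norm (grad q)"
        using grad_nonzero[OF that(1)] G that(1) \<open>\<alpha> > 0\<close> by (intro frac_le) auto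
      then show ?thesis by simp
    qed
    also have "grad q \<bullet> (z - q) / norm (grad q) = normal q \<bullet> (z - q)"
      by (simp add: normal_def sgn_div_norm divide_inverse)
    finally show ?thesis by simp
  qed
  then show ?thesis using \<open>\<alpha> > 0\<close> \<open>G > 0\<close> by (intro exI[of _ "\<alpha> / (2 * G)"]) auto
qed

definition kappa :: real where
  "kappa = (SOME \<kappa>. \<kappa> > 0 \<and> (\<forall>q\<in>M. \<forall>z\<in>D. normal q \<bullet> (z - q) \<le> - (\<kappa> * (norm (z - q))^2)))"

lemma kappa_pos: "kappa > 0"
  and normal_strong_support: "q \<in> M \<Longrightarrow> z \<in> D \<Longrightarrow> normal q \<bullet> (z - q) \<le> - (kappa * (norm (z - q))^2)"
  using someI_ex[OF normal_strong_support_ex] unfolding kappa_def[symmetric] by auto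

lemma normal_support: "q \<in> M \<Longrightarrow> z \<in> D \<Longrightarrow> normal q \<bullet> (z - q) \<le> 0"
  using normal_strong_support[of q z]
    mult_nonneg_nonneg[OF less_imp_le[OF kappa_pos] zero_le_power2[of "norm (z - q)"]]
  by linarith

lemma normal_strict_support: "q \<in> M \<Longrightarrow> z \<in> D \<Longrightarrow> z \<noteq> q \<Longrightarrow> normal q \<bullet> (z - q) < 0"
  using normal_strong_support[of q z] mult_pos_pos[OF kappa_pos, of "(norm (z - q))^2"] by simp

lemma inradius_le_normal_inner:
  assumes "q \<in> M"
  shows "inradius \<le> normal q \<bullet> q"
proof -
  have "\<forall>z\<in>D. normal q \<bullet> z \<le> normal q \<bullet> q"
    using normal_support[OF assms] by (simp add: inner_diff_right)
  from cball_support_ge[OF less_imp_le[OF inradius(1)] inradius(2) this] show ?thesis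
    using norm_normal[OF assms] by simp
qed

lemma normal_inner_pos: "q \<in> M \<Longrightarrow> normal q \<bullet> q > 0"
  using inradius_le_normal_inner inradius by (meson less_le_trans)

lemma normal_inner_le_outradius: "q \<in> M \<Longrightarrow> normal q \<bullet> q \<le> outradius"
  using norm_cauchy_schwarz[of "normal q" q] norm_normal outradius(2) M_subset_D by fastforce

lemma normal_inverse_lipschitz:
  assumes "m \<in> M" "m' \<in> M"
  shows "2 * kappa * norm (m - m') \<le> norm (normal m - normal m')"
proof -
  have "normal m \<bullet> (m' - m) \<le> - (kappa * (norm (m' - m))^2)"
    "normal m' \<bullet> (m - m') \<le> - (kappa * (norm (m - m'))^2)"
    using normal_strong_support assms M_subset_D by blast+
  then have "2 * kappa * (norm (m - m'))^2 \<le> (normal m - normal m') \<bullet> (m - m')"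
    by (simp add: inner_diff_left inner_diff_right norm_minus_commute algebra_simps)
  also have "\<dots> \<le> norm (normal m - normal m') * norm (m - m')" by (rule norm_cauchy_schwarz)
  finally show ?thesis
    by (cases "m = m'") (auto simp: power2_eq_square mult.assoc mult_le_cancel_right)
qed

lemma grad_eq_scaled_normal: "grad q = norm (grad q) *\<^sub>R normal q"
  by (cases "grad q = 0") (simp_all add: normal_def sgn_div_norm)

text \<open>Moving inward along \<open>-q\<close> by \<open>\<delta>\<bar>t\<bar>\<close> lowers \<open>F\<close> to first order by \<open>\<delta>\<bar>t\<bar> grad q \<bullet> q > 0\<close>,
  which beats the \<open>o(t)\<close> error of the linearisation of \<open>F\<close> at \<open>q\<close>.\<close>

lemma D_near_tangent_line:
  assumes q: "q \<in> M" and v: "normal q \<bullet> v = 0" and "\<epsilon> > 0"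
  shows "\<exists>d>0. \<forall>t. 0 < \<bar>t\<bar> \<and> \<bar>t\<bar> < d \<longrightarrow> (\<exists>z\<in>D. norm (z - (q + t *\<^sub>R v)) \<le> \<epsilon> * \<bar>t\<bar>)"
proof -
  have gv: "grad q \<bullet> v = 0" using v by (subst grad_eq_scaled_normal) simp
  define Gq where "Gq = grad q \<bullet> q"
  have "Gq > 0"
    using grad_nonzero[OF q] normal_inner_pos[OF q] by (subst Gq_def, subst grad_eq_scaled_normal) simp
  define \<delta> where "\<delta> = \<epsilon> / (norm q + 1)"
  have "\<delta> > 0" using \<open>\<epsilon> > 0\<close> by (simp add: \<delta>_def add_nonneg_pos)
  have "\<delta> * norm q \<le> \<epsilon>"
    using \<open>\<epsilon> > 0\<close> by (simp add: \<delta>_def pos_divide_le_eq add_nonneg_pos)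
  define A where "A = norm v + \<delta> * norm q"
  have "A \<ge> 0" using \<open>\<delta> > 0\<close> by (simp add: A_def)
  define \<eta> where "\<eta> = \<delta> * Gq / (A + 1)"
  have "\<eta> > 0" using \<open>\<delta> > 0\<close> \<open>Gq > 0\<close> \<open>A \<ge> 0\<close> by (simp add: \<eta>_def)
  have "\<eta> * A < \<delta> * Gq"
    using \<open>\<delta> > 0\<close> \<open>Gq > 0\<close> \<open>A \<ge> 0\<close> by (simp add: \<eta>_def field_simps)
  obtain d1 where "d1 > 0"
    and d1: "\<And>y. norm (y - q) < d1 \<Longrightarrow> norm (F y - F q - DF q (y - q)) \<le> \<eta> * norm (y - q)"
    using has_derivative_F[of q] \<open>\<eta> > 0\<close> unfolding has_derivative_at_alt by blast
  have "\<exists>z\<in>D. norm (z - (q + t *\<^sub>R v)) \<le> \<epsilon> * \<bar>t\<bar>" if t: "0 < \<bar>t\<bar>" "\<bar>t\<bar> < d1 / (A + 1)" for t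
  proof
    define w where "w = t *\<^sub>R v - (\<delta> * \<bar>t\<bar>) *\<^sub>R q"
    have "norm w \<le> \<bar>t\<bar> * A"
      using norm_triangle_ineq4[of "t *\<^sub>R v" "(\<delta> * \<bar>t\<bar>) *\<^sub>R q"] \<open>\<delta> > 0\<close>
      by (simp add: w_def A_def algebra_simps)
    moreover have "\<bar>t\<bar> * A < d1"
      using t \<open>A \<ge> 0\<close> by (smt (verit, best) mult_left_mono pos_less_divide_eq)
    ultimately have "norm (F (q + w) - F q - DF q w) \<le> \<eta> * norm w" using d1[of "q + w"] by simp
    moreover have "DF q w = - (\<delta> * \<bar>t\<bar>) * Gq"
      by (simp add: DF_eq_inner_grad w_def inner_diff_right gv Gq_def)
    moreover have "\<eta> * norm w \<le> \<eta> * (\<bar>t\<bar> * A)"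
      using \<open>norm w \<le> \<bar>t\<bar> * A\<close> \<open>\<eta> > 0\<close> by simp
    moreover have "\<bar>t\<bar> * (\<eta> * A) < \<bar>t\<bar> * (\<delta> * Gq)" using \<open>\<eta> * A < \<delta> * Gq\<close> t by simp
    moreover have "F q = c" using q M_level by simp
    ultimately have "F (q + w) < c" by (simp add: abs_le_iff algebra_simps)
    then show "q + w \<in> D" using D_eq_sublevel by simp
    have "norm ((q + w) - (q + t *\<^sub>R v)) = \<bar>t\<bar> * (\<delta> * norm q)"
      using \<open>\<delta> > 0\<close> by (simp add: w_def)
    also have "\<dots> \<le> \<bar>t\<bar> * \<epsilon>" using \<open>\<delta> * norm q \<le> \<epsilon>\<close> by (simp add: mult_left_mono)
    finally show "norm ((q + w) - (q + t *\<^sub>R v)) \<le> \<epsilon> * \<bar>t\<bar>" by (simp add: mult.commute)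
  qed
  moreover have "d1 / (A + 1) > 0" using \<open>d1 > 0\<close> \<open>A \<ge> 0\<close> by simp
  ultimately show ?thesis by blast
qed

lemma tangent_space_M:
  assumes q: "q \<in> M"
  shows "tangent_space M q = {v. normal q \<bullet> v = 0}"
proof
  show "tangent_space M q \<subseteq> {v. normal q \<bullet> v = 0}"
    using tangent_space_orthogonal_to_support[OF M_subset_D] normal_support[OF q] by blast
  show "{v. normal q \<bullet> v = 0} \<subseteq> tangent_space M q"
  proof
    fix v assume "v \<in> {v. normal q \<bullet> v = 0}"
    then have v: "normal q \<bullet> v = 0" by simp
    have "\<forall>z\<in>D. normal q \<bullet> z \<le> normal q \<bullet> q"
      using normal_support[OF q] by (simp add: inner_diff_right)
    moreover have "normal q \<noteq> 0" using norm_normal[OF q] by auto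
    moreover have "q \<in> frontier D" using q M_frontier by simp
    ultimately have "v \<in> tangent_space (frontier D) q"
      using tangent_space_frontier_convexI[OF convex_D compact_D inradius]
        D_near_tangent_line[OF q v] v by blast
    then show "v \<in> tangent_space M q" using M_frontier by simp
  qed
qed

definition reeb_vector :: "'d phase \<Rightarrow> 'd phase" where
  "reeb_vector q = (1 / (normal q \<bullet> q)) *\<^sub>R cJ (normal q)"

lemma reeb_M:
  assumes "q \<in> M"
  shows "reeb M q = reeb_vector q"
proof -
  have "normal q \<noteq> 0" "normal q \<bullet> q \<noteq> 0"
    using norm_normal[OF assms] normal_inner_pos[OF assms] by auto
  from reeb_eq_of_tangent_space[OF tangent_space_M[OF assms] this] show ?thesis
    by (simp add: reeb_vector_def)
qed

lemma support_normal_eq: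
  assumes p: "p \<in> M" and \<nu>: "\<forall>z\<in>D. \<nu> \<bullet> (z - p) \<le> 0"
  shows "\<nu> = norm \<nu> *\<^sub>R normal p"
proof -
  have n1: "normal p \<bullet> normal p = 1"
    using norm_normal[OF p] by (simp add: power2_norm_eq_inner[symmetric])
  have "normal p \<noteq> 0" using norm_normal[OF p] by auto
  moreover have "\<nu> \<bullet> v = 0" if "normal p \<bullet> v = 0" for v
    using tangent_space_orthogonal_to_support[OF M_subset_D \<nu>] tangent_space_M[OF p] that by blast
  ultimately have "\<nu> = ((\<nu> \<bullet> normal p) / (normal p \<bullet> normal p)) *\<^sub>R normal p"
    by (rule orthogonal_complement_imp_parallel)
  with n1 have \<nu>_eq: "\<nu> = (\<nu> \<bullet> normal p) *\<^sub>R normal p" by simp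
  have "0 \<le> \<nu> \<bullet> p" using \<nu> zero_in_D by force
  also have "\<nu> \<bullet> p = (\<nu> \<bullet> normal p) * (normal p \<bullet> p)"
    using arg_cong[OF \<nu>_eq, of "\<lambda>x. x \<bullet> p"] by simp
  finally have "\<nu> \<bullet> normal p \<ge> 0"
    using normal_inner_pos[OF p] by (simp add: zero_le_mult_iff)
  moreover have "norm \<nu> = \<bar>\<nu> \<bullet> normal p\<bar>"
    using arg_cong[OF \<nu>_eq, of norm] norm_normal[OF p] by simp
  ultimately have "\<nu> \<bullet> normal p = norm \<nu>" by simp
  with \<nu>_eq show ?thesis by metis
qed

lemma linear_maximizer_in_M:
  assumes "a \<in> D" "u \<noteq> 0" "\<forall>z\<in>D. u \<bullet> z \<le> u \<bullet> a"
  shows "a \<in> M" "normal a = sgn u"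
proof -
  show a: "a \<in> M" using D_cases[OF assms(1)] linear_maximizer_not_interior[OF assms(2,3)] by blast
  have "u = norm u *\<^sub>R normal a"
    using support_normal_eq[OF a] assms(3) by (simp add: inner_diff_right)
  then have "sgn u = sgn (norm u *\<^sub>R normal a)" by (rule arg_cong)
  then show "normal a = sgn u"
    using assms(2) norm_normal[OF a] by (simp add: sgn_scaleR sgn_div_norm)
qed

definition support_point :: "'d phase \<Rightarrow> 'd phase" where
  "support_point u = (SOME a. a \<in> D \<and> (\<forall>z\<in>D. u \<bullet> z \<le> u \<bullet> a))"

lemma support_point_in_D: "support_point u \<in> D"
  and support_point_max: "z \<in> D \<Longrightarrow> u \<bullet> z \<le> u \<bullet> support_point u"
proof -
  have "\<exists>a\<in>D. \<forall>z\<in>D. u \<bullet> z \<le> u \<bullet> a"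
    using continuous_attains_sup[OF compact_D _ continuous_on_inner[OF continuous_on_const continuous_on_id]]
      zero_in_D by blast
  then have "\<exists>a. a \<in> D \<and> (\<forall>z\<in>D. u \<bullet> z \<le> u \<bullet> a)" by blast
  from someI_ex[OF this] show "support_point u \<in> D" "z \<in> D \<Longrightarrow> u \<bullet> z \<le> u \<bullet> support_point u"
    unfolding support_point_def by auto
qed

lemma support_point_in_M: "u \<noteq> 0 \<Longrightarrow> support_point u \<in> M"
  and normal_support_point: "u \<noteq> 0 \<Longrightarrow> normal (support_point u) = sgn u"
  using linear_maximizer_in_M[OF support_point_in_D] support_point_max by auto

lemma support_point_near:
  assumes "m \<in> M" "normal m = sgn a" "b \<noteq> 0"
  shows "norm (m - support_point b) \<le> norm (a - b) / (kappa * norm b)"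
proof -
  have "2 * kappa * norm (m - support_point b) \<le> norm (sgn a - sgn b)"
    using normal_inverse_lipschitz[OF assms(1) support_point_in_M[OF assms(3)]]
      normal_support_point[OF assms(3)] assms(2) by simp
  also have "\<dots> \<le> 2 * norm (a - b) / norm b" by (rule norm_sgn_diff_le[OF assms(3)])
  finally show ?thesis using kappa_pos assms(3) by (simp add: field_simps)
qed

section \<open>The difference body and the norm \<open>H\<close>\<close>

definition diff_body :: "'d phase set" where
  "diff_body = {a - b | a b. a \<in> D \<and> b \<in> D}"

lemma symmetrization_eq: "symmetrization M = frontier diff_body"
  using Krein_Milman_frontier[OF convex_D compact_D] M_frontier
  by (simp add: symmetrization_def diff_body_def)

lemma compact_diff_body: "compact diff_body"
  unfolding diff_body_def by (rule compact_differences[OF compact_D compact_D])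

lemma convex_diff_body: "convex diff_body"
proof -
  have "diff_body = (\<Union>x\<in>D. \<Union>y\<in>D. {x - y})" unfolding diff_body_def by auto
  then show ?thesis using convex_differences[OF convex_D convex_D] by simp
qed

lemma cball_subset_diff_body: "cball 0 inradius \<subseteq> diff_body"
  using inradius zero_in_D unfolding diff_body_def by force

lemma zero_interior_diff_body: "0 \<in> interior diff_body"
  using interior_mono[OF cball_subset_diff_body] inradius(1) by (force simp: interior_cball)

lemma frontier_diff_body_subset: "frontier diff_body \<subseteq> diff_body"
  using compact_diff_body by (simp add: compact_imp_closed frontier_subset_closed)

lemma diff_body_support_decomp:
  assumes "a \<in> D" "b \<in> D" "\<nu> \<noteq> 0" "\<forall>z\<in>diff_body. \<nu> \<bullet> z \<le> \<nu> \<bullet> (a - b)"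
  shows "a \<in> M" "normal a = sgn \<nu>"
proof -
  have "\<nu> \<bullet> (z - b) \<le> \<nu> \<bullet> (a - b)" if "z \<in> D" for z
    using assms that unfolding diff_body_def by blast
  then have "\<forall>z\<in>D. \<nu> \<bullet> z \<le> \<nu> \<bullet> a" by (simp add: inner_diff_right)
  then show "a \<in> M" "normal a = sgn \<nu>" using linear_maximizer_in_M[OF assms(1,3)] by auto
qed

lemma inradius_le_diff_body_support:
  assumes "norm \<nu> = 1" "\<forall>z\<in>diff_body. \<nu> \<bullet> z \<le> \<nu> \<bullet> q"
  shows "inradius \<le> \<nu> \<bullet> q"
  using cball_support_ge[OF less_imp_le[OF inradius(1)] cball_subset_diff_body assms(2)] assms(1)
  by simp

text \<open>A tangent vector of the frontier of \<open>D - D\<close> at \<open>a - b\<close> is obtained by moving \<open>a\<close>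
  along a tangent curve of \<open>M\<close> and keeping \<open>b\<close> fixed.\<close>

lemma tangent_space_frontier_diff_body:
  assumes q: "q \<in> frontier diff_body" and "norm \<nu> = 1" and \<nu>: "\<forall>z\<in>diff_body. \<nu> \<bullet> z \<le> \<nu> \<bullet> q"
  shows "tangent_space (frontier diff_body) q = {v. \<nu> \<bullet> v = 0}"
proof
  show "tangent_space (frontier diff_body) q \<subseteq> {v. \<nu> \<bullet> v = 0}"
    using tangent_space_orthogonal_to_support[OF frontier_diff_body_subset, of \<nu> q] \<nu>
    by (auto simp: inner_diff_right)
  show "{v. \<nu> \<bullet> v = 0} \<subseteq> tangent_space (frontier diff_body) q"
  proof
    fix v assume "v \<in> {v. \<nu> \<bullet> v = 0}"
    then have v: "\<nu> \<bullet> v = 0" by simp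
    have "\<nu> \<noteq> 0" using \<open>norm \<nu> = 1\<close> by auto
    obtain a b where ab: "q = a - b" "a \<in> D" "b \<in> D"
      using q frontier_diff_body_subset unfolding diff_body_def by blast
    then have "a \<in> M" "normal a = \<nu>"
      using diff_body_support_decomp[OF ab(2,3) \<open>\<nu> \<noteq> 0\<close>] \<nu> \<open>norm \<nu> = 1\<close> by (auto simp: sgn_div_norm)
    then have "v \<in> tangent_space M a" using tangent_space_M v by simp
    then obtain \<alpha> e where "e > 0" "\<alpha> 0 = a" and \<alpha>M: "\<forall>t\<in>{-e<..<e}. \<alpha> t \<in> M"
      and \<alpha>': "(\<alpha> has_vector_derivative v) (at 0)"
      unfolding tangent_space_def by blast
    show "v \<in> tangent_space (frontier diff_body) q"
    proof (rule tangent_space_frontier_convexI[OF convex_diff_body compact_diff_body inradius(1)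
          cball_subset_diff_body q \<nu> \<open>\<nu> \<noteq> 0\<close> v])
      fix \<epsilon> :: real assume "\<epsilon> > 0"
      then obtain d where "d > 0" and d: "\<forall>t. \<bar>t\<bar> < d \<longrightarrow> norm (\<alpha> t - \<alpha> 0 - t *\<^sub>R v) \<le> \<epsilon> * \<bar>t\<bar>"
        using \<alpha>' unfolding has_vector_derivative_at_0_iff by blast
      have "\<alpha> t - b \<in> diff_body \<and> norm ((\<alpha> t - b) - (q + t *\<^sub>R v)) \<le> \<epsilon> * \<bar>t\<bar>"
        if "\<bar>t\<bar> < min d e" for t
      proof
        have "\<alpha> t \<in> D" using that \<alpha>M M_subset_D by (auto simp: abs_less_iff)
        then show "\<alpha> t - b \<in> diff_body" using ab unfolding diff_body_def by blast
        have "(\<alpha> t - b) - (q + t *\<^sub>R v) = \<alpha> t - \<alpha> 0 - t *\<^sub>R v"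
          using ab \<open>\<alpha> 0 = a\<close> by simp
        moreover have "norm (\<alpha> t - \<alpha> 0 - t *\<^sub>R v) \<le> \<epsilon> * \<bar>t\<bar>" using d that by simp
        ultimately show "norm ((\<alpha> t - b) - (q + t *\<^sub>R v)) \<le> \<epsilon> * \<bar>t\<bar>" by metis
      qed
      then show "\<exists>d>0. \<forall>t. 0 < \<bar>t\<bar> \<and> \<bar>t\<bar> < d \<longrightarrow>
          (\<exists>z\<in>diff_body. norm (z - (q + t *\<^sub>R v)) \<le> \<epsilon> * \<bar>t\<bar>)"
        using \<open>d > 0\<close> \<open>e > 0\<close> by (intro exI[of _ "min d e"]) auto
    qed
  qed
qed

lemma reeb_frontier_diff_body:
  assumes "q \<in> frontier diff_body" "norm \<nu> = 1" "\<forall>z\<in>diff_body. \<nu> \<bullet> z \<le> \<nu> \<bullet> q"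
  shows "reeb (frontier diff_body) q = (1 / (\<nu> \<bullet> q)) *\<^sub>R cJ \<nu>"
proof -
  have "\<nu> \<noteq> 0" "\<nu> \<bullet> q \<noteq> 0"
    using assms(2) inradius_le_diff_body_support[OF assms(2,3)] inradius(1) by auto
  with reeb_eq_of_tangent_space[OF tangent_space_frontier_diff_body[OF assms]] show ?thesis
    by blast
qed

definition width :: "'d phase \<Rightarrow> real" where
  "width u = u \<bullet> (support_point u - support_point (- u))"

lemma width_ge: "a \<in> D \<Longrightarrow> b \<in> D \<Longrightarrow> u \<bullet> (a - b) \<le> width u"
  using support_point_max[of a u] support_point_max[of b "- u"]
  by (simp add: width_def inner_diff_right)

lemma width_ge_diff_body: "z \<in> diff_body \<Longrightarrow> u \<bullet> z \<le> width u"
  unfolding diff_body_def using width_ge by blast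

lemma width_point_in_diff_body: "support_point u - support_point (- u) \<in> diff_body"
  unfolding diff_body_def using support_point_in_D by blast

lemma reeb_diff_body_width_point:
  assumes "y \<noteq> 0"
  defines "q \<equiv> support_point y - support_point (- y)"
  shows "q \<in> frontier diff_body" "width y > 0"
    "reeb (frontier diff_body) q = (1 / width y) *\<^sub>R cJ y"
proof -
  have y_max: "\<forall>z\<in>diff_body. sgn y \<bullet> z \<le> sgn y \<bullet> q"
    using width_ge_diff_body assms by (simp add: width_def sgn_div_norm divide_right_mono)
  have "q \<notin> interior diff_body"
    using linear_maximizer_not_interior[of "sgn y" diff_body q] y_max assms(1) by (simp add: sgn_zero_iff)
  then show q: "q \<in> frontier diff_body"
    using width_point_in_diff_body compact_diff_body
    by (simp add: q_def frontier_def compact_imp_closed closure_closed)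
  have "norm (sgn y) = 1" using assms(1) by (simp add: norm_sgn)
  note support = inradius_le_diff_body_support[OF this y_max]
  have yq: "y \<bullet> q = width y" by (simp add: q_def width_def)
  then have "sgn y \<bullet> q = width y / norm y" by (simp add: sgn_div_norm divide_inverse_commute)
  then have "0 < width y / norm y" using support inradius(1) by linarith
  then show "width y > 0" by (simp add: zero_less_divide_iff)
  show "reeb (frontier diff_body) q = (1 / width y) *\<^sub>R cJ y"
    using reeb_frontier_diff_body[OF q \<open>norm (sgn y) = 1\<close> y_max] \<open>sgn y \<bullet> q = width y / norm y\<close>
      assms(1) yq by (simp add: sgn_div_norm cJ_simps)
qed

lemma reeb_diff_body_ray_eq_width:
  assumes q: "q \<in> frontier diff_body" and "s > 0"
    and eq: "(1 / s) *\<^sub>R cJ y = reeb (frontier diff_body) q"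
  shows "s = width y"
proof -
  obtain \<nu> where "norm \<nu> = 1" and \<nu>: "\<forall>z\<in>diff_body. \<nu> \<bullet> z \<le> \<nu> \<bullet> q"
    using convex_frontier_unit_support[OF convex_diff_body _ q] zero_interior_diff_body by blast
  define k where "k = \<nu> \<bullet> q"
  have "k > 0" using inradius_le_diff_body_support[OF \<open>norm \<nu> = 1\<close> \<nu>] inradius(1) by (simp add: k_def)
  have "(1 / s) *\<^sub>R cJ y = (1 / k) *\<^sub>R cJ \<nu>"
    using eq reeb_frontier_diff_body[OF q \<open>norm \<nu> = 1\<close> \<nu>] by (simp add: k_def)
  then have "cJ ((1 / s) *\<^sub>R y) = cJ ((1 / k) *\<^sub>R \<nu>)" by (simp add: cJ_simps)
  then have "(1 / s) *\<^sub>R y = (1 / k) *\<^sub>R \<nu>" by (metis cJ_simps(1) minus_minus)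
  then have "k *\<^sub>R ((1 / k) *\<^sub>R \<nu>) = k *\<^sub>R ((1 / s) *\<^sub>R y)" by simp
  then have \<nu>_eq: "\<nu> = (k / s) *\<^sub>R y" using \<open>k > 0\<close> by simp
  have "k = (k / s) * (y \<bullet> q)"
    using arg_cong[OF \<nu>_eq, of "\<lambda>z. z \<bullet> q"] by (simp add: k_def)
  then have "s = y \<bullet> q" using \<open>k > 0\<close> \<open>s > 0\<close> by (simp add: field_simps)
  moreover obtain a b where "q = a - b" "a \<in> D" "b \<in> D"
    using q frontier_diff_body_subset unfolding diff_body_def by blast
  then have "y \<bullet> q \<le> width y" using width_ge by blast
  moreover have "(k / s) * width y \<le> (k / s) * (y \<bullet> q)"
    using \<nu> width_point_in_diff_body[of y] \<nu>_eq by (fastforce simp: width_def)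
  then have "width y \<le> y \<bullet> q"
    using mult_le_cancel_left_pos[of "k / s" "width y" "y \<bullet> q"] \<open>k > 0\<close> \<open>s > 0\<close> by simp
  ultimately show ?thesis by simp
qed

lemma Hfun_eq_width: "Hfun M x = width (- cJ x)"
proof (cases "x = 0")
  case True
  then show ?thesis by (simp add: Hfun_def gauge_of_def width_def cJ_simps)
next
  case False
  define y where "y = - cJ x"
  have "norm y = norm x" by (simp add: y_def cJ_simps)
  with False have "y \<noteq> 0" by auto
  have x_eq: "x = cJ y" by (simp add: y_def cJ_simps)
  let ?N = "symp_polar (symmetrization M)"
  have N_eq: "?N = reeb (frontier diff_body) ` frontier diff_body"
    by (simp add: symp_polar_def symmetrization_eq)
  note width_point = reeb_diff_body_width_point[OF \<open>y \<noteq> 0\<close>]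
  have "gauge_of ?N x = width y"
  proof (rule gauge_of_eqI[OF False width_point(2)])
    show "(1 / width y) *\<^sub>R x \<in> ?N"
      unfolding N_eq x_eq width_point(3)[symmetric] using width_point(1) by (rule imageI)
    fix s assume "s > 0" "(1 / s) *\<^sub>R x \<in> ?N"
    then obtain q where "q \<in> frontier diff_body" "(1 / s) *\<^sub>R cJ y = reeb (frontier diff_body) q"
      unfolding N_eq x_eq by blast
    then show "s = width y" using reeb_diff_body_ray_eq_width \<open>s > 0\<close> by blast
  qed
  then show ?thesis by (simp add: Hfun_def y_def)
qed

section \<open>Reeb chords from the exterior\<close>

lemma norm_reeb_vector: "q \<in> M \<Longrightarrow> norm (reeb_vector q) = 1 / (normal q \<bullet> q)"
  using normal_inner_pos[of q] norm_normal[of q] by (simp add: reeb_vector_def cJ_simps)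

lemma reeb_vector_nonzero: "q \<in> M \<Longrightarrow> reeb_vector q \<noteq> 0"
proof -
  assume "q \<in> M"
  then have "norm (reeb_vector q) > 0" using norm_reeb_vector normal_inner_pos by simp
  then show ?thesis by auto
qed

lemma normal_orthogonal_reeb_vector: "normal q \<bullet> reeb_vector q = 0"
  by (simp add: reeb_vector_def cJ_simps)

lemma continuous_on_reeb_vector: "continuous_on M reeb_vector"
  unfolding reeb_vector_def[abs_def]
  by (intro continuous_intros continuous_on_normal continuous_on_compose2[OF continuous_on_cJ continuous_on_normal])
    (auto dest: normal_inner_pos)

lemma reeb_line_outside_D:
  assumes "q \<in> M" "l \<noteq> 0"
  shows "q + l *\<^sub>R reeb_vector q \<notin> D"
proof
  assume "q + l *\<^sub>R reeb_vector q \<in> D"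
  moreover have "q + l *\<^sub>R reeb_vector q \<noteq> q" using assms reeb_vector_nonzero by simp
  ultimately have "normal q \<bullet> (l *\<^sub>R reeb_vector q) < 0"
    using normal_strict_support[OF assms(1)] by fastforce
  then show False by (simp add: normal_orthogonal_reeb_vector)
qed

text \<open>If \<open>m\<^sub>1 \<noteq> m\<^sub>2\<close>, strict convexity makes both \<open>normal m\<^sub>1 \<bullet> (m\<^sub>2 - m\<^sub>1)\<close> and
  \<open>normal m\<^sub>2 \<bullet> (m\<^sub>1 - m\<^sub>2)\<close> negative; but they are positive multiples of
  \<open>\<omega>(normal m\<^sub>2, normal m\<^sub>1)\<close> and of its negative.\<close>

lemma reeb_chord_unique:
  assumes "m1 \<in> M" "m2 \<in> M" "l1 > 0" "l2 > 0"
    and e1: "m1 - x = l1 *\<^sub>R reeb_vector m1" and e2: "m2 - x = l2 *\<^sub>R reeb_vector m2"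
  shows "m1 = m2"
proof (rule ccontr)
  assume "m1 \<noteq> m2"
  define t1 where "t1 = l1 / (normal m1 \<bullet> m1)"
  define t2 where "t2 = l2 / (normal m2 \<bullet> m2)"
  have "t1 > 0" "t2 > 0" using assms normal_inner_pos by (auto simp: t1_def t2_def)
  have "m2 - m1 = (m2 - x) - (m1 - x)" by simp
  also have "\<dots> = l2 *\<^sub>R reeb_vector m2 - l1 *\<^sub>R reeb_vector m1" by (simp only: e1 e2)
  finally have d: "m2 - m1 = t2 *\<^sub>R cJ (normal m2) - t1 *\<^sub>R cJ (normal m1)"
    by (simp add: reeb_vector_def t1_def t2_def)
  define s where "s = normal m1 \<bullet> cJ (normal m2)"
  have "normal m1 \<bullet> (m2 - m1) = t2 * s"
    unfolding d by (simp add: inner_diff_right s_def cJ_simps)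
  moreover have "normal m2 \<bullet> (m1 - m2) = - (t1 * s)"
    using arg_cong[OF d, of uminus] cJ_simps(5)[of "normal m1" "normal m2"]
    by (simp add: inner_diff_right s_def cJ_simps inner_commute)
  moreover have "normal m1 \<bullet> (m2 - m1) < 0" "normal m2 \<bullet> (m1 - m2) < 0"
    using normal_strict_support[of m1 m2] normal_strict_support[of m2 m1] assms(1,2) M_subset_D
      \<open>m1 \<noteq> m2\<close> by auto
  ultimately have "t2 * s < 0" "0 < t1 * s" by linarith+
  then have "s < 0" "0 < s"
    using \<open>t1 > 0\<close> \<open>t2 > 0\<close> by (simp_all add: mult_less_0_iff zero_less_mult_iff)
  then show False by simp
qed

lemma closest_point_along_normal:
  assumes "p \<in> M" "r > 0"
  shows "closest_point D (p + r *\<^sub>R normal p) = p" "p + r *\<^sub>R normal p \<notin> D"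
proof -
  let ?z = "p + r *\<^sub>R normal p"
  have nn: "normal p \<bullet> normal p = 1"
    using norm_normal[OF assms(1)] by (simp add: power2_norm_eq_inner[symmetric])
  have "\<forall>y\<in>D. dist ?z p \<le> dist ?z y"
  proof
    fix y assume "y \<in> D"
    have "(?z - p) \<bullet> (y - p) = r * (normal p \<bullet> (y - p))" by simp
    also have "\<dots> \<le> 0"
      using normal_support[OF assms(1) \<open>y \<in> D\<close>] assms(2) by (simp add: mult_nonneg_nonpos)
    finally have "norm (?z - p) \<le> norm ((?z - p) - (y - p))"
      by (rule norm_le_norm_diff_if_inner_nonpos)
    moreover have "(?z - p) - (y - p) = ?z - y" by (simp add: algebra_simps)
    ultimately show "dist ?z p \<le> dist ?z y" by (simp only: dist_norm)
  qed
  from closest_point_unique[OF convex_D closed_D _ this] assms(1) M_subset_D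
  show "closest_point D ?z = p" by auto
  show "?z \<notin> D"
  proof
    assume "?z \<in> D"
    then have "normal p \<bullet> (?z - p) \<le> 0" using normal_support assms(1) by blast
    moreover have "normal p \<bullet> (?z - p) = r" using nn by simp
    ultimately show False using assms(2) by simp
  qed
qed

lemma closest_point_exterior_in_M:
  assumes "z \<notin> D"
  shows "closest_point D z \<in> M"
proof -
  let ?p = "closest_point D z"
  have "?p \<in> D" using closest_point_in_set[OF closed_D] zero_in_D by blast
  moreover have "z - ?p \<noteq> 0" using assms \<open>?p \<in> D\<close> by auto
  moreover have "\<forall>y\<in>D. (z - ?p) \<bullet> y \<le> (z - ?p) \<bullet> ?p"
    using closest_point_dot[OF convex_D closed_D] by (simp add: inner_diff_right)
  ultimately show ?thesis using D_cases linear_maximizer_not_interior by blast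
qed

lemma exterior_eq_along_normal:
  assumes "z \<notin> D"
  shows "z = closest_point D z + dist z (closest_point D z) *\<^sub>R normal (closest_point D z)"
proof -
  let ?p = "closest_point D z"
  have "z - ?p = norm (z - ?p) *\<^sub>R normal ?p"
    using support_normal_eq[OF closest_point_exterior_in_M[OF assms]]
      closest_point_dot[OF convex_D closed_D] by blast
  then show ?thesis by (simp add: dist_norm algebra_simps)
qed

text \<open>The exterior point \<open>p + r normal p\<close> (whose nearest point in \<open>D\<close> is \<open>p\<close>) is sent by
  \<open>reeb_shift\<close> to \<open>p - r reeb_vector p\<close>, the point whose Reeb chord ends at \<open>p\<close>, i.e. whose
  \<open>m_minus\<close> is \<open>p\<close>.\<close>

definition chord_start :: "'d phase \<times> real \<Rightarrow> 'd phase" where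
  "chord_start pr = fst pr - snd pr *\<^sub>R reeb_vector (fst pr)"

lemma continuous_on_chord_start: "continuous_on (M \<times> UNIV) chord_start"
  unfolding chord_start_def[abs_def]
  by (intro continuous_intros continuous_on_compose2[OF continuous_on_reeb_vector continuous_on_fst])
    auto

definition reeb_shift :: "'d phase \<Rightarrow> 'd phase" where
  "reeb_shift z = chord_start (closest_point D z, dist z (closest_point D z))"

lemma continuous_on_reeb_shift: "continuous_on (- D) reeb_shift"
proof -
  have "continuous_on (- D) (\<lambda>z. (closest_point D z, dist z (closest_point D z)))"
    by (intro continuous_intros continuous_on_closest_point[OF convex_D closed_D]) (use zero_in_D in auto)
  moreover have "(\<lambda>z. (closest_point D z, dist z (closest_point D z))) ` (- D) \<subseteq> M \<times> UNIV"
    using closest_point_exterior_in_M by auto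
  ultimately show ?thesis
    unfolding reeb_shift_def by (rule continuous_on_compose2[OF continuous_on_chord_start])
qed

lemma dist_closest_point_exterior_pos:
  assumes "z \<notin> D"
  shows "dist z (closest_point D z) > 0"
proof -
  have "closest_point D z \<in> D" using closest_point_in_set[OF closed_D] zero_in_D by blast
  with assms show ?thesis by auto
qed

lemma inj_on_reeb_shift: "inj_on reeb_shift (- D)"
proof (rule inj_onI)
  fix z1 z2 assume z: "z1 \<in> - D" "z2 \<in> - D" "reeb_shift z1 = reeb_shift z2"
  define p1 p2 where "p1 = closest_point D z1" and "p2 = closest_point D z2"
  define s1 s2 where "s1 = dist z1 p1" and "s2 = dist z2 p2"
  have M: "p1 \<in> M" "p2 \<in> M"
    using z closest_point_exterior_in_M by (auto simp: p1_def p2_def)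
  have s: "s1 > 0" "s2 > 0"
    using z dist_closest_point_exterior_pos by (auto simp: s1_def s2_def p1_def p2_def)
  have e1: "p1 - reeb_shift z1 = s1 *\<^sub>R reeb_vector p1"
    by (simp add: reeb_shift_def chord_start_def p1_def s1_def)
  have e2: "p2 - reeb_shift z1 = s2 *\<^sub>R reeb_vector p2"
    unfolding z(3) by (simp add: reeb_shift_def chord_start_def p2_def s2_def)
  have "p1 = p2" by (rule reeb_chord_unique[OF M s e1 e2])
  have "s1 *\<^sub>R reeb_vector p1 = p1 - reeb_shift z1" using e1 by simp
  also have "\<dots> = s2 *\<^sub>R reeb_vector p1" using e2 \<open>p1 = p2\<close> by simp
  finally have "s1 = s2" using reeb_vector_nonzero[OF M(1)] by auto
  moreover have "z1 = p1 + s1 *\<^sub>R normal p1" "z2 = p2 + s2 *\<^sub>R normal p2"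
    unfolding p1_def p2_def s1_def s2_def using z by (auto intro: exterior_eq_along_normal)
  ultimately show "z1 = z2" using \<open>p1 = p2\<close> by simp
qed

lemma reeb_shift_image: "reeb_shift ` (- D) = chord_start ` (M \<times> {0<..})"
proof
  show "reeb_shift ` (- D) \<subseteq> chord_start ` (M \<times> {0<..})"
  proof
    fix y assume "y \<in> reeb_shift ` (- D)"
    then obtain z where "z \<notin> D" "y = reeb_shift z" by auto
    then show "y \<in> chord_start ` (M \<times> {0<..})"
      unfolding reeb_shift_def
      using closest_point_exterior_in_M[OF \<open>z \<notin> D\<close>] dist_closest_point_exterior_pos[OF \<open>z \<notin> D\<close>]
      by simp
  qed
  show "chord_start ` (M \<times> {0<..}) \<subseteq> reeb_shift ` (- D)"
  proof
    fix y assume "y \<in> chord_start ` (M \<times> {0<..})"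
    then obtain p r where pr: "p \<in> M" "r > 0" "y = chord_start (p, r)" by auto
    let ?z = "p + r *\<^sub>R normal p"
    have "reeb_shift ?z = y"
      using closest_point_along_normal(1)[OF pr(1,2)] norm_normal[OF pr(1)] pr
      by (simp add: reeb_shift_def dist_norm)
    moreover have "?z \<in> - D" using closest_point_along_normal(2)[OF pr(1,2)] by simp
    ultimately show "y \<in> reeb_shift ` (- D)" by blast
  qed
qed

lemma chord_start_exterior: "p \<in> M \<Longrightarrow> r > 0 \<Longrightarrow> chord_start (p, r) \<notin> D"
  using reeb_line_outside_D[of p "- r"] by (simp add: chord_start_def)

lemma chord_start_param:
  assumes "p \<in> M" "r > 0"
  shows "r = dist (chord_start (p, r)) p * (normal p \<bullet> p)"
  using assms norm_reeb_vector[OF assms(1)] normal_inner_pos[OF assms(1)]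
  by (simp add: chord_start_def dist_norm)

lemma chord_start_param_bounds:
  assumes "p \<in> M" "r > 0" "ball x \<delta> \<subseteq> - D" "dist x (chord_start (p, r)) < \<delta> / 2"
  shows "\<delta> / 2 * inradius \<le> r" "r \<le> (norm x + \<delta> + outradius) * outradius"
proof -
  let ?y = "chord_start (p, r)"
  have "\<delta> > 0" using assms(4) zero_le_dist[of x ?y] by linarith
  have "p \<in> D" using assms(1) M_subset_D by blast
  then have "dist x p \<ge> \<delta>" using assms(3) by (auto simp: subset_eq)
  then have lo: "\<delta> / 2 \<le> dist ?y p" using assms(4) dist_triangle[of x p ?y] by (simp add: dist_commute)
  have hi: "dist ?y p \<le> norm x + \<delta> + outradius"
    using assms(4) \<open>\<delta> > 0\<close> outradius(2)[OF \<open>p \<in> D\<close>] norm_triangle_ineq4[of ?y p]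
      norm_triangle_ineq2[of ?y x] by (simp add: dist_norm norm_minus_commute)
  have np: "inradius \<le> normal p \<bullet> p" "normal p \<bullet> p \<le> outradius"
    using inradius_le_normal_inner normal_inner_le_outradius assms(1) by auto
  have "\<delta> / 2 * inradius \<le> dist ?y p * (normal p \<bullet> p)"
    by (rule mult_mono) (use lo np inradius(1) in auto)
  moreover have "dist ?y p * (normal p \<bullet> p) \<le> (norm x + \<delta> + outradius) * outradius"
    by (rule mult_mono) (use hi np inradius(1) outradius(1) \<open>\<delta> > 0\<close> in auto)
  ultimately show "\<delta> / 2 * inradius \<le> r" "r \<le> (norm x + \<delta> + outradius) * outradius"
    using chord_start_param[OF assms(1,2)] by simp_all
qed

lemma reeb_shift_exterior: "z \<notin> D \<Longrightarrow> reeb_shift z \<notin> D"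
  unfolding reeb_shift_def
  by (rule chord_start_exterior[OF closest_point_exterior_in_M dist_closest_point_exterior_pos])

text \<open>Near a point \<open>x\<close> of the exterior, the chords \<open>chord_start (p, r)\<close> have parameters \<open>r\<close>
  in a compact interval, so the image of \<open>reeb_shift\<close> is relatively closed.\<close>

lemma reeb_shift_image_closedin: "closedin (top_of_set (- D)) (reeb_shift ` (- D))"
proof -
  let ?I = "chord_start ` (M \<times> {0<..})"
  have closure_part: "x \<in> ?I" if x: "x \<notin> D" "x \<in> closure ?I" for x
  proof -
    obtain \<delta> where "\<delta> > 0" and \<delta>: "ball x \<delta> \<subseteq> - D"
      using x(1) open_Compl[OF closed_D] open_contains_ball by blast
    define s1 s2 where "s1 = \<delta> / 2 * inradius" and "s2 = (norm x + \<delta> + outradius) * outradius"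
    define C where "C = chord_start ` (M \<times> {s1..s2})"
    have "s1 > 0" using \<open>\<delta> > 0\<close> inradius by (simp add: s1_def)
    have "compact C" unfolding C_def
      by (rule compact_continuous_image[OF continuous_on_subset[OF continuous_on_chord_start]])
        (auto intro: compact_Times compact_M)
    have "C \<subseteq> ?I" unfolding C_def using \<open>s1 > 0\<close> by auto
    have "y \<in> C" if "y \<in> ?I" "dist x y < \<delta> / 2" for y
    proof -
      obtain p r where pr: "p \<in> M" "r > 0" "y = chord_start (p, r)" using \<open>y \<in> ?I\<close> by auto
      then have "s1 \<le> r" "r \<le> s2"
        using chord_start_param_bounds[OF pr(1,2) \<delta>] that(2) by (simp_all add: s1_def s2_def)
      then show ?thesis using pr unfolding C_def by auto
    qed
    have "x \<in> closure C"
      unfolding closure_approachable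
    proof (intro allI impI)
      fix e :: real assume "e > 0"
      then have "min e (\<delta> / 2) > 0" using \<open>\<delta> > 0\<close> by simp
      then obtain y where "y \<in> ?I" "dist y x < min e (\<delta> / 2)"
        using x(2) unfolding closure_approachable by blast
      then have "dist x y < \<delta> / 2" "dist y x < e" by (simp_all add: dist_commute)
      with \<open>y \<in> ?I\<close> \<open>\<And>y. y \<in> ?I \<Longrightarrow> dist x y < \<delta> / 2 \<Longrightarrow> y \<in> C\<close>
      show "\<exists>y\<in>C. dist y x < e" by blast
    qed
    then have "x \<in> C" using closure_closed[OF compact_imp_closed[OF \<open>compact C\<close>]] by simp
    with \<open>C \<subseteq> ?I\<close> show ?thesis by blast
  qed
  have "?I \<subseteq> - D"
  proof
    fix y assume "y \<in> ?I"
    then obtain z where "z \<notin> D" "y = reeb_shift z" unfolding reeb_shift_image[symmetric] by blast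
    then show "y \<in> - D" using reeb_shift_exterior by simp
  qed
  moreover have "- D \<inter> closure ?I \<subseteq> ?I" using closure_part by blast
  ultimately have "?I = - D \<inter> closure ?I" using closure_subset[of ?I] by blast
  then show ?thesis unfolding reeb_shift_image closedin_closed by (intro exI[of _ "closure ?I"]) simp
qed

lemma reeb_shift_onto: "reeb_shift ` (- D) = - D"
proof -
  have "0 < CARD('d)" "DIM('d phase) = CARD('d) + CARD('d)" by simp_all
  then have "2 \<le> DIM('d phase)" by linarith
  then have "connected (- D)" by (rule connected_complement_bounded_convex[OF bounded_D convex_D])
  moreover have "openin (top_of_set (- D)) (reeb_shift ` (- D))"
  proof (rule open_subset)
    show "reeb_shift ` (- D) \<subseteq> - D"
      using reeb_shift_exterior by blast
    show "open (reeb_shift ` (- D))"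
      by (rule invariance_of_domain[OF continuous_on_reeb_shift open_Compl[OF closed_D] inj_on_reeb_shift])
  qed
  moreover have "reeb_shift ` (- D) \<noteq> {}"
    using M_nonempty reeb_shift_image by auto
  ultimately show ?thesis
    using reeb_shift_image_closedin unfolding connected_clopen by blast
qed

lemma m_minus_spec:
  assumes "x \<notin> D"
  shows "m_minus M x \<in> M" "\<exists>l>0. m_minus M x - x = l *\<^sub>R reeb_vector (m_minus M x)"
proof -
  obtain p r where pr: "p \<in> M" "r > 0" "x = chord_start (p, r)"
    using assms reeb_shift_onto reeb_shift_image by blast
  have "m_minus M x = p"
    unfolding m_minus_def
  proof (rule the_equality)
    show "p \<in> M \<and> (\<exists>l>0. p - x = l *\<^sub>R reeb M p)"
      using pr reeb_M by (auto simp: chord_start_def)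
    fix m assume m: "m \<in> M \<and> (\<exists>l>0. m - x = l *\<^sub>R reeb M m)"
    then obtain l where "l > 0" "m - x = l *\<^sub>R reeb M m" by blast
    then have l: "l > 0" "m - x = l *\<^sub>R reeb_vector m" using reeb_M[of m] m by simp_all
    have "p - x = r *\<^sub>R reeb_vector p" using pr(3) by (simp add: chord_start_def)
    from reeb_chord_unique[OF _ pr(1) l(1) pr(2) l(2) this] m show "m = p" by blast
  qed
  then show "m_minus M x \<in> M" "\<exists>l>0. m_minus M x - x = l *\<^sub>R reeb_vector (m_minus M x)"
    using pr by (auto simp: chord_start_def)
qed

section \<open>Growth of \<open>H\<close> along the billiard\<close>

lemma width_nonneg: "0 \<le> width u"
  using width_ge[OF zero_in_D zero_in_D] by simp

lemma norm_support_point_diff_le: "norm (support_point u - support_point v) \<le> 2 * outradius"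
  using norm_triangle_ineq4[of "support_point u" "support_point v"]
    outradius(2)[OF support_point_in_D, of u] outradius(2)[OF support_point_in_D, of v] by linarith

lemma width_le: "width u \<le> 2 * outradius * norm u"
  using norm_cauchy_schwarz[of u "support_point u - support_point (- u)"]
    norm_support_point_diff_le[of u "- u"] mult_left_mono[of _ _ "norm u"]
  by (fastforce simp: width_def mult.commute)

lemma Hfun_nonneg: "0 \<le> Hfun M x" and Hfun_le: "Hfun M x \<le> 2 * outradius * norm x"
  using width_nonneg width_le[of "- cJ x"] by (simp_all add: Hfun_eq_width cJ_simps)

lemma normal_m_minus:
  assumes "x \<notin> D"
  shows "normal (m_minus M x) = sgn (cJ x - cJ (m_minus M x))"
proof -
  let ?m = "m_minus M x"
  obtain l where "l > 0" and l: "?m - x = l *\<^sub>R reeb_vector ?m" using m_minus_spec[OF assms] by blast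
  have "cJ x - cJ ?m = - cJ (?m - x)" by (simp add: cJ_simps)
  also have "\<dots> = - cJ ((l / (normal ?m \<bullet> ?m)) *\<^sub>R cJ (normal ?m))"
    by (simp add: l reeb_vector_def)
  also have "\<dots> = (l / (normal ?m \<bullet> ?m)) *\<^sub>R normal ?m" by (simp add: cJ_simps)
  finally have "sgn (cJ x - cJ ?m) = sgn (l / (normal ?m \<bullet> ?m)) *\<^sub>R sgn (normal ?m)"
    by (simp only: sgn_scaleR)
  moreover have "sgn (l / (normal ?m \<bullet> ?m)) = 1"
    using \<open>l > 0\<close> normal_inner_pos[OF m_minus_spec(1)[OF assms]] by simp
  moreover have "sgn (normal ?m) = normal ?m"
    using norm_normal[OF m_minus_spec(1)[OF assms]] by (simp add: sgn_div_norm)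
  ultimately show ?thesis by simp
qed

lemma osb_map_exterior:
  assumes "x \<notin> D"
  shows "osb_map M x \<notin> D"
proof -
  let ?m = "m_minus M x"
  obtain l where "l > 0" "?m - x = l *\<^sub>R reeb_vector ?m" using m_minus_spec[OF assms] by blast
  then have "osb_map M x = ?m + l *\<^sub>R reeb_vector ?m"
    by (simp add: osb_map_def scaleR_2 algebra_simps)
  then show ?thesis using reeb_line_outside_D[OF m_minus_spec(1)[OF assms]] \<open>l > 0\<close> by simp
qed

lemma norm_osb_map_le:
  assumes "x \<notin> D"
  shows "norm (osb_map M x) \<le> norm x + 2 * outradius"
  using norm_triangle_ineq4[of "2 *\<^sub>R m_minus M x" x] M_subset_D
    outradius(2)[of "m_minus M x"] m_minus_spec(1)[OF assms]
  by (auto simp: osb_map_def)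

text \<open>The support function of \<open>D - D\<close> is convex, with subgradient
  \<open>support_point y - support_point (- y)\<close> at \<open>y\<close>; the Lipschitz inverse Gauss map controls
  how fast that subgradient moves.\<close>

lemma width_change_le:
  assumes "y \<noteq> 0" "y + \<delta> \<noteq> 0"
  shows "\<bar>width (y + \<delta>) - width y\<bar>
    \<le> \<bar>\<delta> \<bullet> (support_point y - support_point (- y))\<bar> + 2 * (norm \<delta>)^2 / (kappa * norm y)"
proof -
  define A where "A u = support_point u - support_point (- u)" for u
  have lower: "width y + \<delta> \<bullet> A y \<le> width (y + \<delta>)"
    using width_ge[OF support_point_in_D support_point_in_D, of "y + \<delta>" y "- y"]
    by (simp add: A_def width_def inner_add_left)
  have upper: "width (y + \<delta>) \<le> width y + \<delta> \<bullet> A (y + \<delta>)"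
    using width_ge[OF support_point_in_D support_point_in_D, of y "y + \<delta>" "- (y + \<delta>)"]
    by (simp add: A_def width_def inner_add_left)
  have near: "norm (support_point u - support_point v) \<le> norm \<delta> / (kappa * norm y)"
    if "u \<noteq> 0" "v \<noteq> 0" "norm (u - v) = norm \<delta>" "norm v = norm y" for u v
    using support_point_near[OF support_point_in_M[OF that(1)] normal_support_point[OF that(1)] that(2)]
      that(3,4) by simp
  have "- (y + \<delta>) \<noteq> 0" "- y \<noteq> 0" using assms by (simp_all only: neg_equal_0_iff_equal not_False_eq_True)
  have "norm (A (y + \<delta>) - A y)
      \<le> norm (support_point (y + \<delta>) - support_point y)
        + norm (support_point (- (y + \<delta>)) - support_point (- y))"
    unfolding A_def by (rule order_trans[OF _ norm_triangle_ineq4]) (simp add: algebra_simps)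
  also have "\<dots> \<le> norm \<delta> / (kappa * norm y) + norm \<delta> / (kappa * norm y)"
    using near[OF assms(2,1)] near[OF \<open>- (y + \<delta>) \<noteq> 0\<close> \<open>- y \<noteq> 0\<close>]
    by (intro add_mono) (simp_all add: norm_minus_commute)
  also have "\<dots> = 2 * (norm \<delta> / (kappa * norm y))" by simp
  finally have "\<bar>\<delta> \<bullet> (A (y + \<delta>) - A y)\<bar> \<le> norm \<delta> * (2 * (norm \<delta> / (kappa * norm y)))"
    using Cauchy_Schwarz_ineq2[of \<delta> "A (y + \<delta>) - A y"] mult_left_mono[of _ _ "norm \<delta>"]
    by (meson norm_ge_zero order_trans)
  then have "\<bar>\<delta> \<bullet> (A (y + \<delta>) - A y)\<bar> \<le> 2 * (norm \<delta>)^2 / (kappa * norm y)"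
    by (simp add: power2_eq_square mult.assoc mult.left_commute)
  moreover have "0 \<le> 2 * (norm \<delta>)^2 / (kappa * norm y)" using kappa_pos by simp
  ultimately show ?thesis
    using lower upper abs_ge_self[of "\<delta> \<bullet> A y"] abs_ge_minus_self[of "\<delta> \<bullet> A y"]
    unfolding A_def[symmetric] by (simp add: inner_diff_right abs_le_iff)
qed

lemma m_minus_near_support_point:
  assumes "x \<notin> D" "b \<noteq> 0"
  shows "norm (m_minus M x - support_point b) \<le> norm (cJ x - cJ (m_minus M x) - b) / (kappa * norm b)"
  by (rule support_point_near[OF m_minus_spec(1)[OF assms(1)] normal_m_minus[OF assms(1)] assms(2)])

lemma two_step_reflection_points_near:
  assumes x: "x \<notin> D" and "x \<noteq> 0"
  defines "m1 \<equiv> m_minus M x" and "m2 \<equiv> m_minus M (osb_map M x)"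
  shows "norm ((m2 - m1) - (support_point (- cJ x) - support_point (cJ x)))
    \<le> 4 * outradius / (kappa * norm x)"
proof -
  let ?R = outradius
  have Tx: "osb_map M x \<notin> D" by (rule osb_map_exterior[OF x])
  have "norm (cJ x) = norm x" by (simp add: cJ_simps)
  with \<open>x \<noteq> 0\<close> have "cJ x \<noteq> 0" "- cJ x \<noteq> 0" by auto
  have q: "kappa * norm x > 0" using kappa_pos \<open>x \<noteq> 0\<close> by simp
  have "norm m1 \<le> ?R" "norm m2 \<le> ?R"
    using m_minus_spec(1)[OF x] m_minus_spec(1)[OF Tx] M_subset_D outradius(2)[of m1]
      outradius(2)[of m2] unfolding m1_def m2_def by auto
  have "norm (m1 - support_point (cJ x)) \<le> norm (cJ x - cJ m1 - cJ x) / (kappa * norm (cJ x))"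
    using m_minus_near_support_point[OF x \<open>cJ x \<noteq> 0\<close>] by (simp add: m1_def)
  also have "\<dots> \<le> ?R / (kappa * norm x)"
    using \<open>norm m1 \<le> ?R\<close> q by (simp add: cJ_simps divide_right_mono)
  finally have e1: "norm (m1 - support_point (cJ x)) \<le> ?R / (kappa * norm x)" .
  have "norm (m2 - support_point (- cJ x))
      \<le> norm (cJ (osb_map M x) - cJ m2 + cJ x) / (kappa * norm (- cJ x))"
    using m_minus_near_support_point[OF Tx \<open>- cJ x \<noteq> 0\<close>] by (simp add: m2_def)
  also have "cJ (osb_map M x) - cJ m2 + cJ x = 2 *\<^sub>R cJ m1 - cJ m2"
    by (simp add: osb_map_def m1_def cJ_simps)
  also have "norm (2 *\<^sub>R cJ m1 - cJ m2) \<le> 3 * ?R"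
    using norm_triangle_ineq4[of "2 *\<^sub>R cJ m1" "cJ m2"] \<open>norm m1 \<le> ?R\<close> \<open>norm m2 \<le> ?R\<close>
    by (simp add: cJ_simps)
  finally have e2: "norm (m2 - support_point (- cJ x)) \<le> 3 * ?R / (kappa * norm x)"
    using q by (simp add: cJ_simps divide_right_mono)
  have eq: "(m2 - m1) - (support_point (- cJ x) - support_point (cJ x))
      = (m2 - support_point (- cJ x)) - (m1 - support_point (cJ x))" by simp
  have "3 * ?R / (kappa * norm x) + ?R / (kappa * norm x) = 4 * ?R / (kappa * norm x)"
    by (simp add: add_divide_distrib[symmetric])
  then show ?thesis unfolding eq
    using norm_triangle_ineq4[of "m2 - support_point (- cJ x)" "m1 - support_point (cJ x)"] e1 e2
    by linarith
qed

text \<open>Far from \<open>D\<close> the two reflection points \<open>m\<^sub>1, m\<^sub>2\<close> of \<open>T\<^sup>2\<close> lie near the support points in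
  the directions \<open>J x\<close> and \<open>-J x\<close>; so \<open>T\<^sup>2\<close> moves \<open>-J x\<close> by \<open>\<delta> = -2J(m\<^sub>2 - m\<^sub>1)\<close>, which is
  \<open>J\<close>-orthogonal to the subgradient of the width up to \<open>O(1/|x|)\<close>.\<close>

lemma width_two_step_le:
  assumes x: "x \<notin> D" and "norm x \<ge> 8 * outradius + 1"
  shows "\<bar>width (- cJ (osb_map M (osb_map M x))) - width (- cJ x)\<bar>
    \<le> 48 * outradius^2 / (kappa * norm x)"
proof -
  let ?T = "osb_map M" and ?R = outradius
  define y where "y = - cJ x"
  have "norm y = norm x" by (simp add: y_def cJ_simps)
  have "x \<noteq> 0" "y \<noteq> 0" using assms(2) \<open>norm y = norm x\<close> outradius(1) by auto
  have q: "kappa * norm y > 0" using kappa_pos \<open>y \<noteq> 0\<close> by simp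
  define m1 m2 where "m1 = m_minus M x" and "m2 = m_minus M (?T x)"
  have "norm m1 \<le> ?R" "norm m2 \<le> ?R"
    using m_minus_spec(1)[OF x] m_minus_spec(1)[OF osb_map_exterior[OF x]] M_subset_D
      outradius(2)[of m1] outradius(2)[of m2] unfolding m1_def m2_def by auto
  define \<delta> where "\<delta> = - 2 *\<^sub>R cJ (m2 - m1)"
  have T2: "- cJ (?T (?T x)) = y + \<delta>"
    by (simp add: osb_map_def m1_def m2_def y_def \<delta>_def cJ_simps algebra_simps scaleR_2)
  have "norm \<delta> = 2 * norm (m2 - m1)" unfolding \<delta>_def norm_scaleR cJ_simps(6) by simp
  then have "norm \<delta> \<le> 4 * ?R"
    using norm_triangle_ineq4[of m2 m1] \<open>norm m1 \<le> ?R\<close> \<open>norm m2 \<le> ?R\<close> by simp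
  then have "norm \<delta> < norm y" using assms(2) \<open>norm y = norm x\<close> outradius(1) by linarith
  have "y + \<delta> \<noteq> 0"
  proof
    assume "y + \<delta> = 0"
    then have "\<delta> = - y" by (simp add: eq_neg_iff_add_eq_0 add.commute)
    with \<open>norm \<delta> < norm y\<close> show False by simp
  qed
  define A where "A = support_point y - support_point (- y)"
  define e where "e = (m2 - m1) - A"
  have "norm e \<le> 4 * ?R / (kappa * norm y)"
    using two_step_reflection_points_near[OF x \<open>x \<noteq> 0\<close>] \<open>norm y = norm x\<close>
    by (simp add: e_def A_def y_def m1_def m2_def)
  have "\<delta> \<bullet> A = - 2 * (cJ A \<bullet> A + cJ e \<bullet> A)"
    by (simp add: \<delta>_def e_def cJ_simps inner_add_left inner_diff_left)
  then have "\<delta> \<bullet> A = - 2 * (cJ e \<bullet> A)" by (simp add: cJ_simps(3))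
  then have "\<bar>\<delta> \<bullet> A\<bar> \<le> 2 * (norm e * norm A)"
    using Cauchy_Schwarz_ineq2[of "cJ e" A] by (simp add: cJ_simps)
  also have "\<dots> \<le> 2 * ((4 * ?R / (kappa * norm y)) * (2 * ?R))"
    using \<open>norm e \<le> _\<close> norm_support_point_diff_le[of y "- y"] outradius(1) q
    by (intro mult_left_mono mult_mono) (auto simp: A_def)
  finally have "\<bar>\<delta> \<bullet> A\<bar> \<le> 16 * ?R^2 / (kappa * norm y)" by (simp add: power2_eq_square)
  moreover have "2 * (norm \<delta>)^2 / (kappa * norm y) \<le> 32 * ?R^2 / (kappa * norm y)"
    using \<open>norm \<delta> \<le> 4 * ?R\<close> q power_mono[OF \<open>norm \<delta> \<le> 4 * ?R\<close>, of 2]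
    by (simp add: divide_right_mono power_mult_distrib)
  ultimately have "\<bar>width (y + \<delta>) - width y\<bar> \<le> 48 * ?R^2 / (kappa * norm y)"
    using width_change_le[OF \<open>y \<noteq> 0\<close> \<open>y + \<delta> \<noteq> 0\<close>] by (simp add: A_def add_divide_distrib[symmetric])
  then show ?thesis using T2 \<open>norm y = norm x\<close> by (simp add: y_def)
qed

lemma Hfun_sq_two_step_far:
  assumes "z \<notin> D" "norm z \<ge> 8 * outradius + 1"
  defines "K \<equiv> 48 * outradius^2 / kappa"
  shows "\<bar>(Hfun M (osb_map M (osb_map M z)))\<^sup>2 - (Hfun M z)\<^sup>2\<bar> \<le> 4 * outradius * K + K^2"
proof -
  let ?a = "Hfun M (osb_map M (osb_map M z))" and ?b = "Hfun M z" and ?n = "norm z"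
  have "K \<ge> 0" using kappa_pos by (simp add: K_def)
  have "?n \<ge> 1" using assms(2) outradius(1) by linarith
  have d: "\<bar>?a - ?b\<bar> \<le> K / ?n"
    using width_two_step_le[OF assms(1,2)] by (simp add: Hfun_eq_width K_def)
  have "?a\<^sup>2 - ?b\<^sup>2 = (?a - ?b) * (?a + ?b)" by (simp add: power2_eq_square algebra_simps)
  then have "\<bar>?a\<^sup>2 - ?b\<^sup>2\<bar> = \<bar>?a - ?b\<bar> * (?a + ?b)"
    using Hfun_nonneg[of z] Hfun_nonneg[of "osb_map M (osb_map M z)"] by (simp add: abs_mult)
  also have "\<dots> \<le> (K / ?n) * (2 * ?b + K / ?n)"
    using d Hfun_nonneg[of z] Hfun_nonneg[of "osb_map M (osb_map M z)"]
    by (intro mult_mono) (auto simp: abs_le_iff)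
  also have "\<dots> \<le> (K / ?n) * (4 * outradius * ?n + K)"
  proof (rule mult_left_mono)
    have "K / ?n \<le> K" using \<open>?n \<ge> 1\<close> \<open>K \<ge> 0\<close> by (simp add: divide_le_eq mult_le_cancel_left1)
    then show "2 * ?b + K / ?n \<le> 4 * outradius * ?n + K" using Hfun_le[of z] by linarith
  qed (use \<open>K \<ge> 0\<close> in simp)
  also have "\<dots> = 4 * outradius * K + K^2 / ?n"
    using \<open>?n \<ge> 1\<close> by (cases "z = 0") (simp_all add: divide_simps power2_eq_square algebra_simps)
  also have "\<dots> \<le> 4 * outradius * K + K^2"
    using \<open>?n \<ge> 1\<close> by (simp add: divide_le_eq mult_le_cancel_left1)
  finally show ?thesis .
qed

lemma Hfun_sq_two_step_near:
  assumes "z \<notin> D" "norm z < 8 * outradius + 1"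
  defines "B \<equiv> 2 * outradius * (12 * outradius + 1)"
  shows "\<bar>(Hfun M (osb_map M (osb_map M z)))\<^sup>2 - (Hfun M z)\<^sup>2\<bar> \<le> B^2"
proof -
  let ?T = "osb_map M"
  have bound: "Hfun M w \<le> B" if "norm w \<le> 12 * outradius + 1" for w
  proof -
    have "2 * outradius * norm w \<le> B"
      unfolding B_def by (rule mult_left_mono[OF that]) (use outradius(1) in simp)
    then show ?thesis using Hfun_le[of w] by linarith
  qed
  have "norm (?T (?T z)) \<le> norm z + 4 * outradius"
    using norm_osb_map_le[OF assms(1)] norm_osb_map_le[OF osb_map_exterior[OF assms(1)]] by simp
  then have "Hfun M (?T (?T z)) \<le> B" "Hfun M z \<le> B"
    using bound assms(2) outradius(1) by simp_all
  then have "(Hfun M (?T (?T z)))\<^sup>2 \<le> B^2" "(Hfun M z)\<^sup>2 \<le> B^2"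
    using Hfun_nonneg[of z] Hfun_nonneg[of "?T (?T z)"] by (simp_all add: power_mono)
  then show ?thesis
    using zero_le_power2[of "Hfun M z"] zero_le_power2[of "Hfun M (?T (?T z))"]
    by (intro abs_leI) linarith+
qed

lemma Hfun_sq_two_step_bounded:
  obtains C where "C > 0"
    and "\<And>z. z \<notin> D \<Longrightarrow> \<bar>(Hfun M (osb_map M (osb_map M z)))\<^sup>2 - (Hfun M z)\<^sup>2\<bar> \<le> C"
proof
  define K where "K = 48 * outradius^2 / kappa"
  define C where "C = 4 * outradius * K + K^2 + (2 * outradius * (12 * outradius + 1))^2 + 1"
  have "K \<ge> 0" using kappa_pos by (simp add: K_def)
  then have "0 \<le> 4 * outradius * K + K^2" using outradius(1) by simp
  then show "C > 0" by (simp add: C_def add_nonneg_pos)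
  show "\<bar>(Hfun M (osb_map M (osb_map M z)))\<^sup>2 - (Hfun M z)\<^sup>2\<bar> \<le> C" if "z \<notin> D" for z
  proof (cases "norm z < 8 * outradius + 1")
    case True
    then show ?thesis
      using Hfun_sq_two_step_near[OF that True] \<open>0 \<le> 4 * outradius * K + K^2\<close>
      by (simp add: C_def)
  next
    case False
    then show ?thesis
      unfolding C_def
      using Hfun_sq_two_step_far[OF that, folded K_def]
        zero_le_power2[of "2 * outradius * (12 * outradius + 1)"]
      by linarith
  qed
qed

lemma Hfun_sq_growth:
  "\<exists>\<Lambda>>0. \<exists>C>0. \<forall>x. \<forall>k::nat. Hfun M x \<ge> \<Lambda> \<longrightarrow> k \<ge> 1 \<longrightarrow>
     \<bar>(Hfun M ((osb_map M ^^ (2 * k)) x))\<^sup>2 - (Hfun M x)\<^sup>2\<bar> \<le> C * real k"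
proof -
  obtain C where "C > 0"
    and C: "\<And>z. z \<notin> D \<Longrightarrow> \<bar>(Hfun M (osb_map M (osb_map M z)))\<^sup>2 - (Hfun M z)\<^sup>2\<bar> \<le> C"
    using Hfun_sq_two_step_bounded by blast
  have "osb_map M ^^ 2 = (\<lambda>z. osb_map M (osb_map M z))" by (simp add: numeral_2_eq_2 fun_eq_iff)
  then have iterate: "osb_map M ^^ (2 * k) = (\<lambda>z. osb_map M (osb_map M z)) ^^ k" for k
    by (metis funpow_mult)
  have exterior: "x \<notin> D" if "Hfun M x \<ge> 2 * outradius^2 + 1" for x
  proof
    assume "x \<in> D"
    then have "2 * outradius * norm x \<le> 2 * outradius * outradius"
      using outradius by (simp add: mult_left_mono)
    then show False using that Hfun_le[of x] by (simp add: power2_eq_square)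
  qed
  have "\<bar>(Hfun M ((osb_map M ^^ (2 * k)) x))\<^sup>2 - (Hfun M x)\<^sup>2\<bar> \<le> C * real k"
    if "Hfun M x \<ge> 2 * outradius^2 + 1" for x k
  proof -
    have "((\<lambda>z. osb_map M (osb_map M z)) ^^ k) x \<in> - D \<and>
        \<bar>(Hfun M (((\<lambda>z. osb_map M (osb_map M z)) ^^ k) x))\<^sup>2 - (Hfun M x)\<^sup>2\<bar> \<le> C * real k"
    proof (rule iterate_increment_bound)
      show "x \<in> - D" using exterior[OF that] by simp
      fix z assume "z \<in> - D"
      then show "osb_map M (osb_map M z) \<in> - D" using osb_map_exterior by simp
      show "\<bar>(Hfun M (osb_map M (osb_map M z)))\<^sup>2 - (Hfun M z)\<^sup>2\<bar> \<le> C"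
        using C \<open>z \<in> - D\<close> by simp
    qed
    then show ?thesis unfolding iterate by blast
  qed
  moreover have "0 < 2 * outradius^2 + 1" using zero_le_power2[of outradius] by linarith
  ultimately show ?thesis using \<open>C > 0\<close> by blast
qed

end

theorem theorem3p5:
  fixes M D :: "'d::finite phase set" and F :: "'d phase \<Rightarrow> real" and c :: real
  assumes "compact D" and "convex D" and "0 \<in> interior D"
    and "\<And>x y. x \<in> D \<Longrightarrow> y \<in> D \<Longrightarrow> x \<noteq> y \<Longrightarrow> open_segment x y \<subseteq> interior D"
    and "M = frontier D"
    and "smooth_fun F" and "posdef_hessian F"
    and "M = {x. F x = c}"
    and "\<And>q. q \<in> M \<Longrightarrow> frechet_derivative F (at q) \<noteq> (\<lambda>_. 0)"
  shows "\<exists>\<Lambda>>0. \<exists>C>0. \<forall>x. \<forall>k::nat. Hfun M x \<ge> \<Lambda> \<longrightarrow> k \<ge> 1 \<longrightarrow>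
           \<bar>(Hfun M ((osb_map M ^^ (2 * k)) x))\<^sup>2 - (Hfun M x)\<^sup>2\<bar> \<le> C * real k"
proof -
  interpret convex_level_body M D F c
    using assms by unfold_locales
  show ?thesis by (rule Hfun_sq_growth)
qed

end
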